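(* Let $r\ge0$ and let $f:A\to B$ be a morphism of finitely generated $E_r$-cofibrant dga's over a field $\mathbf{k}$ of characteristic $0$. The following are equivalent: (1) $f$ admits an $r$-splitting; (2) the morphism $E_r:\mathrm{Aut}_W(f)\to\mathrm{Aut}(E_r(f))$ is surjective; (3) there exist $\alpha\in\mathbf{k}^*$, not a root of unity, and $\Phi=(\Phi^A,\Phi^B)\in\mathrm{Aut}_W(f)$ such that $E_r(\Phi^A)$ and $E_r(\Phi^B)$ are the $r$-bigrading automorphisms of $E_r(A)$ and $E_r(B)$ associated with $\alpha$.
   Context: Filtered dga's: a filtered dga over $\mathbf{k}$ is a non-negatively graded commutative dga $A$ (differential of degree $+1$) with an increasing multiplicative regular exhaustive filtration $W$ by subcomplexes, with filtered unit. $E_r(A)$ is the spectral sequence of $(A,W)$ with $E_0^{-p,n+p}(A)=Gr^W_pA^n$, a bigraded dga. $\mathrm{Aut}_W(f)$ is the group of pairs $(F^A,F^B)$ of filtered dga automorphisms of $A$ and $B$ with $fF^A=F^Bf$; $\mathrm{Aut}(E_r(f))$ is the group of pairs of bigraded dga automorphisms $(G^A,G^B)$ of $E_r(A),E_r(B)$ with $E_r(f)G^A=G^BE_r(f)$; $E_r$ denotes the induced group morphism. For $\alpha\in\mathbf{k}^*$, the $r$-bigrading automorphism $\varphi_\alpha$ of $E_r(A)$ is $\varphi_\alpha(a)=\alpha^{nr+p}a$ for $a\in E_r^{-p,n+p}(A)$. $E_r$-cofibrant dga's: an $E_r$-cofibrant extension of degree $n$ and weight $p$ of a filtered dga $A$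 is $A\otimes_\xi\Lambda V$ with $V$ concentrated in degree $n$ and pure weight $p$ and $\xi:V\to W_{p-r}A^{n+1}$ linear with $d\xi=0$; $dv=\xi(v)$, filtration extended multiplicatively. An $E_r$-cofibrant dga is the colimit of a sequence of such extensions from $\mathbf{k}$; finitely generated means finitely many extensions with finite-dimensional $V$. $r$-splitting: an $r$-splitting of a filtered dga $A$ is a direct sum decomposition $A=\bigoplus_{p,q}A^{p,q}$ with $d(A^{p,q})\subset A^{p+r,q-r+1}$, $A^{p,q}\cdot A^{p',q'}\subset A^{p+p',q+q'}$ and $W_mA^n=\bigoplus_{p\le m}A^{-p,n+p}$; a morphism $f:A\to B$ admits an $r$-splitting if $A,B$ admit $r$-splittings and $f(A^{p,q})\subset B^{p,q}$. *)

theory Defs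
  imports Complex_Main
begin

text \<open>A filtered dga is represented on a type 'v (the whole type is the underlying
  vector space A = (+)_n A^n). Degrees n and weights p are integers;
  deg A n is A^n (zero for n < 0) and W A p n is W_p A^n.\<close>

record ('k, 'v) fdga =
  smult :: "'k \<Rightarrow> 'v \<Rightarrow> 'v"
  mul   :: "'v \<Rightarrow> 'v \<Rightarrow> 'v"
  one   :: "'v"
  dif   :: "'v \<Rightarrow> 'v"
  deg   :: "int \<Rightarrow> 'v set"
  W     :: "int \<Rightarrow> int \<Rightarrow> 'v set"

definition is_fdga :: "('k::field, 'v::ab_group_add) fdga \<Rightarrow> bool" where
  "is_fdga A \<longleftrightarrow>
     vector_space (smult A)
   \<and> (\<forall>n. module.subspace (smult A) (deg A n))
   \<and> (\<forall>n<0. deg A n = {0})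
   \<and> (\<forall>v. \<exists>g P. finite P \<and> (\<forall>n\<in>P. g n \<in> deg A n) \<and> v = sum g P)
   \<and> (\<forall>g P. finite P \<and> (\<forall>n\<in>P. g n \<in> deg A n) \<and> sum g P = 0 \<longrightarrow> (\<forall>n\<in>P. g n = 0))
   \<and> (\<forall>a b c. mul A (a + b) c = mul A a c + mul A b c \<and> mul A a (b + c) = mul A a b + mul A a c)
   \<and> (\<forall>k a b. mul A (smult A k a) b = smult A k (mul A a b) \<and> mul A a (smult A k b) = smult A k (mul A a b))
   \<and> (\<forall>a b c. mul A (mul A a b) c = mul A a (mul A b c))
   \<and> (\<forall>a. mul A (one A) a = a \<and> mul A a (one A) = a)
   \<and> one A \<in> deg A 0
   \<and> (\<forall>n m a b. a \<in> deg A n \<longrightarrow> b \<in> deg A m \<longrightarrow>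
        mul A a b \<in> deg A (n + m) \<and>
        mul A a b = (if even (n * m) then mul A b a else - mul A b a))
   \<and> (\<forall>a b. dif A (a + b) = dif A a + dif A b)
   \<and> (\<forall>k a. dif A (smult A k a) = smult A k (dif A a))
   \<and> (\<forall>n. dif A ` deg A n \<subseteq> deg A (n + 1))
   \<and> (\<forall>a. dif A (dif A a) = 0)
   \<and> (\<forall>n a b. a \<in> deg A n \<longrightarrow>
        dif A (mul A a b) = mul A (dif A a) b + (if even n then mul A a (dif A b) else - mul A a (dif A b)))
   \<and> (\<forall>p n. module.subspace (smult A) (W A p n))
   \<and> (\<forall>p n. W A p n \<subseteq> W A (p + 1) n)
   \<and> (\<forall>p n. W A p n \<subseteq> deg A n)
   \<and> (\<forall>n. (\<Union>p. W A p n) = deg A n)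
   \<and> (\<forall>n. \<exists>q. W A q n = {0})
   \<and> (\<forall>p n. dif A ` W A p n \<subseteq> W A p (n + 1))
   \<and> (\<forall>p q n m a b. a \<in> W A p n \<longrightarrow> b \<in> W A q m \<longrightarrow> mul A a b \<in> W A (p + q) (n + m))
   \<and> one A \<in> W A 0 0"

definition fdga_hom :: "('k::field, 'v::ab_group_add) fdga \<Rightarrow> ('k, 'w::ab_group_add) fdga \<Rightarrow> ('v \<Rightarrow> 'w) \<Rightarrow> bool" where
  "fdga_hom A B f \<longleftrightarrow>
     (\<forall>u v. f (u + v) = f u + f v)
   \<and> (\<forall>c v. f (smult A c v) = smult B c (f v))
   \<and> (\<forall>n. f ` deg A n \<subseteq> deg B n)
   \<and> f (one A) = one B
   \<and> (\<forall>u v. f (mul A u v) = mul B (f u) (f v))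
   \<and> (\<forall>v. f (dif A v) = dif B (f v))
   \<and> (\<forall>p n. f ` W A p n \<subseteq> W B p n)"

definition fil_aut :: "('k::field, 'v::ab_group_add) fdga \<Rightarrow> ('v \<Rightarrow> 'v) \<Rightarrow> bool" where
  "fil_aut A F \<longleftrightarrow> fdga_hom A A F \<and> bij F \<and> (\<forall>p n. F ` W A p n = W A p n)"

definition AutW :: "('k::field, 'v::ab_group_add) fdga \<Rightarrow> ('k, 'w::ab_group_add) fdga \<Rightarrow> ('v \<Rightarrow> 'w)
    \<Rightarrow> ('v \<Rightarrow> 'v) \<Rightarrow> ('w \<Rightarrow> 'w) \<Rightarrow> bool" where
  "AutW A B f FA FB \<longleftrightarrow> fil_aut A FA \<and> fil_aut B FB \<and> (\<forall>a. f (FA a) = FB (f a))"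

text \<open>Indexing: (p, n) = (weight, degree), so the term E_r^{p,n} below is
  E_r^{-p,n+p}(A) in the paper's notation. Page index s is an integer (s = r - 1 may be -1).\<close>

definition Zs :: "('k, 'v::ab_group_add) fdga \<Rightarrow> int \<Rightarrow> int \<Rightarrow> int \<Rightarrow> 'v set" where
  "Zs A s p n = {a \<in> W A p n. dif A a \<in> W A (p - s) (n + 1)}"

definition Bs :: "('k, 'v::ab_group_add) fdga \<Rightarrow> int \<Rightarrow> int \<Rightarrow> int \<Rightarrow> 'v set" where
  "Bs A s p n = {a \<in> W A p n. \<exists>b \<in> W A (p + s) (n - 1). a = dif A b}"

definition Ddenom :: "('k, 'v::ab_group_add) fdga \<Rightarrow> int \<Rightarrow> int \<Rightarrow> int \<Rightarrow> 'v set" where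
  "Ddenom A r p n = {a + b | a b. a \<in> Zs A (r - 1) (p - 1) n \<and> b \<in> Bs A (r - 1) p n}"

definition cls :: "('k, 'v::ab_group_add) fdga \<Rightarrow> int \<Rightarrow> int \<Rightarrow> int \<Rightarrow> 'v \<Rightarrow> 'v set" where
  "cls A r p n z = (\<lambda>y. z + y) ` Ddenom A r p n"

definition Ep :: "('k, 'v::ab_group_add) fdga \<Rightarrow> int \<Rightarrow> int \<Rightarrow> int \<Rightarrow> 'v set set" where
  "Ep A r p n = cls A r p n ` Zs A r p n"

definition rep :: "'v set \<Rightarrow> 'v" where
  "rep X = (SOME x. x \<in> X)"

definition E_add :: "'v::ab_group_add set \<Rightarrow> 'v set \<Rightarrow> 'v set" where
  "E_add X Y = {x + y | x y. x \<in> X \<and> y \<in> Y}"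

definition E_smult :: "('k, 'v::ab_group_add) fdga \<Rightarrow> int \<Rightarrow> int \<Rightarrow> int \<Rightarrow> 'k \<Rightarrow> 'v set \<Rightarrow> 'v set" where
  "E_smult A r p n c X = cls A r p n (smult A c (rep X))"

text \<open>Product of a class of bidegree (p,n) with one of bidegree (p',n'), landing in (p+p', n+n').\<close>
definition E_mul :: "('k, 'v::ab_group_add) fdga \<Rightarrow> int \<Rightarrow> int \<Rightarrow> int \<Rightarrow> 'v set \<Rightarrow> 'v set \<Rightarrow> 'v set" where
  "E_mul A r p n X Y = cls A r p n (mul A (rep X) (rep Y))"

definition E_d :: "('k, 'v::ab_group_add) fdga \<Rightarrow> int \<Rightarrow> int \<Rightarrow> int \<Rightarrow> 'v set \<Rightarrow> 'v set" where
  "E_d A r p n X = cls A r (p - r) (n + 1) (dif A (rep X))"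

definition E_one :: "('k, 'v::ab_group_add) fdga \<Rightarrow> int \<Rightarrow> 'v set" where
  "E_one A r = cls A r 0 0 (one A)"

definition Er_map :: "('k, 'v::ab_group_add) fdga \<Rightarrow> ('k, 'w::ab_group_add) fdga \<Rightarrow> int \<Rightarrow> ('v \<Rightarrow> 'w)
    \<Rightarrow> int \<Rightarrow> int \<Rightarrow> 'v set \<Rightarrow> 'w set" where
  "Er_map A B r F p n X = cls B r p n (F (rep X))"

definition Er_aut :: "('k::field, 'v::ab_group_add) fdga \<Rightarrow> int \<Rightarrow> (int \<Rightarrow> int \<Rightarrow> 'v set \<Rightarrow> 'v set) \<Rightarrow> bool" where
  "Er_aut A r G \<longleftrightarrow>
     (\<forall>p n. bij_betw (G p n) (Ep A r p n) (Ep A r p n))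
   \<and> (\<forall>p n. \<forall>X\<in>Ep A r p n. \<forall>Y\<in>Ep A r p n. G p n (E_add X Y) = E_add (G p n X) (G p n Y))
   \<and> (\<forall>p n c. \<forall>X\<in>Ep A r p n. G p n (E_smult A r p n c X) = E_smult A r p n c (G p n X))
   \<and> (\<forall>p n p' n'. \<forall>X\<in>Ep A r p n. \<forall>Y\<in>Ep A r p' n'.
        G (p + p') (n + n') (E_mul A r (p + p') (n + n') X Y)
          = E_mul A r (p + p') (n + n') (G p n X) (G p' n' Y))
   \<and> (\<forall>p n. \<forall>X\<in>Ep A r p n. G (p - r) (n + 1) (E_d A r p n X) = E_d A r p n (G p n X))
   \<and> G 0 0 (E_one A r) = E_one A r"

definition AutE :: "('k::field, 'v::ab_group_add) fdga \<Rightarrow> ('k, 'w::ab_group_add) fdga \<Rightarrow> int \<Rightarrow> ('v \<Rightarrow> 'w)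
    \<Rightarrow> (int \<Rightarrow> int \<Rightarrow> 'v set \<Rightarrow> 'v set) \<Rightarrow> (int \<Rightarrow> int \<Rightarrow> 'w set \<Rightarrow> 'w set) \<Rightarrow> bool" where
  "AutE A B r f GA GB \<longleftrightarrow> Er_aut A r GA \<and> Er_aut B r GB
     \<and> (\<forall>p n. \<forall>X\<in>Ep A r p n. Er_map A B r f p n (GA p n X) = GB p n (Er_map A B r f p n X))"

definition Er_induces :: "('k::field, 'v::ab_group_add) fdga \<Rightarrow> int \<Rightarrow> ('v \<Rightarrow> 'v)
    \<Rightarrow> (int \<Rightarrow> int \<Rightarrow> 'v set \<Rightarrow> 'v set) \<Rightarrow> bool" where
  "Er_induces A r F G \<longleftrightarrow> (\<forall>p n. \<forall>X\<in>Ep A r p n. Er_map A A r F p n X = G p n X)"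

text \<open>The r-bigrading automorphism phi_alpha: multiplication by alpha^(n r + p) on the
  term of weight p and degree n (i.e. on E_r^{-p,n+p}).\<close>
definition bigrading_aut :: "('k::field, 'v::ab_group_add) fdga \<Rightarrow> int \<Rightarrow> 'k \<Rightarrow> int \<Rightarrow> int \<Rightarrow> 'v set \<Rightarrow> 'v set" where
  "bigrading_aut A r \<alpha> p n X = E_smult A r p n (\<alpha> powi (n * r + p)) X"

text \<open>S p n stands for A^{-p,n+p} (weight p, degree n).\<close>
definition r_splitting :: "('k::field, 'v::ab_group_add) fdga \<Rightarrow> int \<Rightarrow> (int \<Rightarrow> int \<Rightarrow> 'v set) \<Rightarrow> bool" where
  "r_splitting A r S \<longleftrightarrow>
     (\<forall>p n. module.subspace (smult A) (S p n))
   \<and> (\<forall>v. \<exists>g P. finite P \<and> (\<forall>i\<in>P. g i \<in> S (fst i) (snd i)) \<and> v = sum g P)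
   \<and> (\<forall>g P. finite P \<and> (\<forall>i\<in>P. g i \<in> S (fst i) (snd i)) \<and> sum g P = 0 \<longrightarrow> (\<forall>i\<in>P. g i = 0))
   \<and> (\<forall>p n. dif A ` S p n \<subseteq> S (p - r) (n + 1))
   \<and> (\<forall>p n p' n' a b. a \<in> S p n \<longrightarrow> b \<in> S p' n' \<longrightarrow> mul A a b \<in> S (p + p') (n + n'))
   \<and> (\<forall>m n. W A m n = {sum g P | g P. finite P \<and> P \<subseteq> {..m} \<and> (\<forall>p\<in>P. g p \<in> S p n)})"

definition admits_r_splitting :: "('k::field, 'v::ab_group_add) fdga \<Rightarrow> ('k, 'w::ab_group_add) fdga
    \<Rightarrow> int \<Rightarrow> ('v \<Rightarrow> 'w) \<Rightarrow> bool" where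
  "admits_r_splitting A B r f \<longleftrightarrow>
     (\<exists>SA SB. r_splitting A r SA \<and> r_splitting B r SB \<and> (\<forall>p n. f ` SA p n \<subseteq> SB p n))"

text \<open>Generators xs (in the order of the successive extensions), with degrees ds and weights ws.
  Monomials are indexed by exponent lists e (exponent at most 1 on odd generators).\<close>

definition mpow :: "('k, 'v) fdga \<Rightarrow> 'v \<Rightarrow> nat \<Rightarrow> 'v" where
  "mpow A x k = ((mul A x) ^^ k) (one A)"

definition mono :: "('k, 'v) fdga \<Rightarrow> 'v list \<Rightarrow> nat list \<Rightarrow> 'v" where
  "mono A xs e = foldr (\<lambda>i acc. mul A (mpow A (xs ! i) (e ! i)) acc) [0..<length xs] (one A)"

definition Adm :: "int list \<Rightarrow> nat list set" where
  "Adm ds = {e. length e = length ds \<and> (\<forall>i<length ds. odd (ds ! i) \<longrightarrow> e ! i \<le> 1)}"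

definition mdeg :: "int list \<Rightarrow> nat list \<Rightarrow> int" where
  "mdeg ds e = (\<Sum>i<length ds. int (e ! i) * ds ! i)"

definition mwt :: "int list \<Rightarrow> nat list \<Rightarrow> int" where
  "mwt ws e = (\<Sum>i<length ws. int (e ! i) * ws ! i)"

definition Er_cofibrant_fg :: "('k::field, 'v::ab_group_add) fdga \<Rightarrow> int \<Rightarrow> bool" where
  "Er_cofibrant_fg A r \<longleftrightarrow> is_fdga A \<and>
    (\<exists>xs ds ws. length ds = length xs \<and> length ws = length xs
      \<and> (\<forall>i<length xs. 0 \<le> ds ! i \<and> xs ! i \<in> deg A (ds ! i))
      \<and> inj_on (mono A xs) (Adm ds)
      \<and> \<not> module.dependent (smult A) (mono A xs ` Adm ds)
      \<and> module.span (smult A) (mono A xs ` Adm ds) = UNIV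
      \<and> (\<forall>p n. W A p n = module.span (smult A)
            (mono A xs ` {e \<in> Adm ds. mdeg ds e = n \<and> mwt ws e \<le> p}))
      \<and> (\<forall>i<length xs. dif A (xs ! i) \<in> module.span (smult A)
            (mono A xs ` {e \<in> Adm ds. mdeg ds e = ds ! i + 1 \<and> mwt ws e \<le> ws ! i - r
                                    \<and> (\<forall>j. i \<le> j \<and> j < length xs \<longrightarrow> e ! j = 0)})))"

end

theory Submission
  imports Defs
begin

text \<open>
  For a finitely generated E_r-cofibrant dga the differential lowers the weight by r on all of W,
  so E_r^{p,n} is just W_p/W_{p-1} in degree n, with the operations of the associated graded.

  (1) \<Longrightarrow> (2): an r-splitting identifies each piece A^{p,n} with E_r^{p,n}, compatibly with
  products, differentials and f; an automorphism of E_r(f) is transported to the pieces and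
  extended additively.
  (2) \<Longrightarrow> (3): the bigrading automorphisms commute with E_r(f); take \<alpha> = 2, which is not a
  root of unity in characteristic 0.
  (3) \<Longrightarrow> (1): a lift \<Phi> of \<phi>_\<alpha> acts on W_p/W_{p-1} in degree n by \<alpha>^(nr+p), and these
  scalars are pairwise distinct for fixed n. Hence the eigenspaces of \<Phi> split the (bounded
  below) filtration; since \<Phi> commutes with d, products and f, they form an r-splitting of f.
\<close>

locale filtered_dga =
  fixes A :: "('k::field, 'v::ab_group_add) fdga"
  assumes is_fdga: "is_fdga A"
begin

sublocale vs: vector_space "smult A"
  using is_fdga unfolding is_fdga_def by (elim conjE)

lemma W_subspace: "vs.subspace (W A p n)"
  using is_fdga unfolding is_fdga_def by (elim conjE) simp

lemma W_Suc: "W A p n \<subseteq> W A (p + 1) n"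
  using is_fdga unfolding is_fdga_def by (elim conjE) simp

lemma W_subset_deg: "W A p n \<subseteq> deg A n"
  using is_fdga unfolding is_fdga_def by (elim conjE) simp

lemma W_exhaustive: "(\<Union>p. W A p n) = deg A n"
  using is_fdga unfolding is_fdga_def by (elim conjE) simp

lemma W_regular: "\<exists>q. W A q n = {0}"
  using is_fdga unfolding is_fdga_def by (elim conjE) simp

lemma W_mul: "a \<in> W A p n \<Longrightarrow> b \<in> W A q m \<Longrightarrow> mul A a b \<in> W A (p + q) (n + m)"
  using is_fdga unfolding is_fdga_def by (elim conjE) simp

lemma one_W: "one A \<in> W A 0 0"
  using is_fdga unfolding is_fdga_def by (elim conjE) simp

lemma one_deg: "one A \<in> deg A 0"
  using is_fdga unfolding is_fdga_def by (elim conjE) simp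

lemma mul_add_left: "mul A (a + b) c = mul A a c + mul A b c"
  using is_fdga unfolding is_fdga_def by (elim conjE) simp

lemma mul_add_right: "mul A a (b + c) = mul A a b + mul A a c"
  using is_fdga unfolding is_fdga_def by (elim conjE) simp

lemma mul_scale_left: "mul A (smult A k a) b = smult A k (mul A a b)"
  using is_fdga unfolding is_fdga_def by (elim conjE) simp

lemma mul_scale_right: "mul A a (smult A k b) = smult A k (mul A a b)"
  using is_fdga unfolding is_fdga_def by (elim conjE) simp

lemma one_mul [simp]: "mul A (one A) a = a"
  using is_fdga unfolding is_fdga_def by (elim conjE) simp

lemma mul_one [simp]: "mul A a (one A) = a"
  using is_fdga unfolding is_fdga_def by (elim conjE) simp

lemma dif_add: "dif A (a + b) = dif A a + dif A b"
  using is_fdga unfolding is_fdga_def by (elim conjE) simp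

lemma dif_scale: "dif A (smult A k a) = smult A k (dif A a)"
  using is_fdga unfolding is_fdga_def by (elim conjE) simp

lemma leibniz: "a \<in> deg A n \<Longrightarrow> dif A (mul A a b) =
    mul A (dif A a) b + (if even n then mul A a (dif A b) else - mul A a (dif A b))"
  using is_fdga unfolding is_fdga_def by (elim conjE) simp

lemma deg_subspace: "vs.subspace (deg A n)"
  using is_fdga unfolding is_fdga_def by (elim conjE) simp

lemma deg_spanning: "\<exists>g P. finite P \<and> (\<forall>n\<in>P. g n \<in> deg A n) \<and> v = sum g P"
  using is_fdga unfolding is_fdga_def by (elim conjE) simp

lemma deg_independent:
  "finite P \<Longrightarrow> \<forall>n\<in>P. g n \<in> deg A n \<Longrightarrow> sum g P = 0 \<Longrightarrow> \<forall>n\<in>P. g n = 0"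
  using is_fdga unfolding is_fdga_def by (elim conjE) simp

sublocale dif: additive "dif A"
  by standard (rule dif_add)

lemma W_mono: "p \<le> q \<Longrightarrow> W A p n \<subseteq> W A q n"
proof (induction q rule: int_ge_induct)
  case (step q)
  then show ?case using W_Suc by blast
qed simp

lemmas W_0 = vs.subspace_0[OF W_subspace]
lemmas W_add = vs.subspace_add[OF W_subspace]
lemmas W_diff = vs.subspace_diff[OF W_subspace]
lemmas W_scale = vs.subspace_scale[OF W_subspace]
lemmas W_sum = vs.subspace_sum[OF W_subspace]

lemma W_bounded_below: "\<exists>q. \<forall>p\<le>q. W A p n = {0}"
proof -
  obtain q where "W A q n = {0}"
    using W_regular by blast
  then show ?thesis
    using W_mono W_0 by blast
qed

lemma mul_zero_left [simp]: "mul A 0 b = 0"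
  using mul_add_left[of 0 0 b] by simp

lemma mul_zero_right [simp]: "mul A a 0 = 0"
  using mul_add_right[of a 0 0] by simp

lemma mul_sum_left: "mul A (sum f P) b = (\<Sum>i\<in>P. mul A (f i) b)"
  by (induction P rule: infinite_finite_induct) (auto simp: mul_add_left)

lemma mul_sum_right: "mul A a (sum f P) = (\<Sum>i\<in>P. mul A a (f i))"
  by (induction P rule: infinite_finite_induct) (auto simp: mul_add_right)

lemma dif_one: "dif A (one A) = 0"
  using leibniz[OF one_deg, of "one A"] by simp

end

section \<open>Weights in finitely generated E_r-cofibrant dga's\<close>

lemma unit_vector_sum:
  assumes "i < length xs" "length ys = length xs"
  shows "(\<Sum>j<length ys. int ((replicate (length xs) 0)[i := 1] ! j) * ys ! j) = ys ! i"
proof -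
  have "(\<Sum>j<length ys. int ((replicate (length xs) 0)[i := 1] ! j) * ys ! j)
      = (\<Sum>j<length ys. if j = i then ys ! j else 0)"
    using assms by (intro sum.cong) (auto simp: nth_list_update)
  then show ?thesis using assms by simp
qed

context filtered_dga
begin

lemma one_Zs: "one A \<in> Zs A s 0 0"
  unfolding Zs_def using one_W dif_one W_0 by simp

lemma mul_Zs:
  assumes a: "a \<in> Zs A s p n" and b: "b \<in> Zs A s q m"
  shows "mul A a b \<in> Zs A s (p + q) (n + m)"
proof -
  have "mul A (dif A a) b \<in> W A (p + q - s) (n + m + 1)"
    using W_mul[of "dif A a" "p - s" "n + 1" b q m] a b by (simp add: Zs_def algebra_simps)
  moreover have "mul A a (dif A b) \<in> W A (p + q - s) (n + m + 1)"
    using W_mul[of a p n "dif A b" "q - s" "m + 1"] a b by (simp add: Zs_def algebra_simps)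
  moreover have "a \<in> deg A n"
    using a W_subset_deg by (auto simp: Zs_def)
  ultimately have "dif A (mul A a b) \<in> W A (p + q - s) (n + m + 1)"
    using leibniz W_add vs.subspace_neg[OF W_subspace] by simp
  then show ?thesis
    using W_mul a b by (simp add: Zs_def)
qed

lemma mpow_Zs: "x \<in> Zs A s p n \<Longrightarrow> mpow A x k \<in> Zs A s (int k * p) (int k * n)"
proof (induction k)
  case 0
  then show ?case using one_Zs by (simp add: mpow_def)
next
  case (Suc k)
  then have "mul A x (mpow A x k) \<in> Zs A s (p + int k * p) (n + int k * n)"
    using mul_Zs by blast
  then show ?case by (simp add: mpow_def algebra_simps)
qed

lemma mono_Zs:
  assumes "length ds = length xs" "length ws = length xs"
    and "\<And>i. i < length xs \<Longrightarrow> xs ! i \<in> Zs A s (ws ! i) (ds ! i)"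
  shows "mono A xs e \<in> Zs A s (mwt ws e) (mdeg ds e)"
proof -
  have "foldr (\<lambda>i acc. mul A (mpow A (xs ! i) (e ! i)) acc) L (one A)
          \<in> Zs A s (\<Sum>i\<leftarrow>L. int (e ! i) * ws ! i) (\<Sum>i\<leftarrow>L. int (e ! i) * ds ! i)"
    if "set L \<subseteq> {..<length xs}" for L
    using that
  proof (induction L)
    case Nil
    then show ?case using one_Zs by simp
  next
    case (Cons j L)
    then show ?case using mul_Zs[OF mpow_Zs[OF assms(3)]] by simp
  qed
  from this[of "[0..<length xs]"] show ?thesis
    using assms(1,2) unfolding mono_def mwt_def mdeg_def
    by (simp add: sum_set_upt_conv_sum_list_nat[symmetric] atLeast0LessThan)
qed

lemma mono_unit_vector:
  assumes "i < length xs"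
  shows "mono A xs ((replicate (length xs) 0)[i := 1]) = xs ! i"
proof -
  have "foldr (\<lambda>j acc. mul A (mpow A (xs ! j) ((replicate (length xs) 0)[i := 1] ! j)) acc) L (one A)
      = (if i \<in> set L then xs ! i else one A)"
    if "distinct L" "\<forall>j\<in>set L. j < length xs" for L
    using that assms by (induction L) (auto simp: nth_list_update mpow_def)
  from this[of "[0..<length xs]"] show ?thesis
    using assms by (simp add: mono_def)
qed

lemma Er_cofibrant_fg_generators:
  assumes "Er_cofibrant_fg A r"
  shows "\<exists>xs ds ws. length ds = length xs \<and> length ws = length xs
    \<and> (\<forall>p n. W A p n = vs.span (mono A xs ` {e \<in> Adm ds. mdeg ds e = n \<and> mwt ws e \<le> p}))
    \<and> (\<forall>i<length xs. dif A (xs ! i)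
           \<in> vs.span (mono A xs ` {e \<in> Adm ds. mdeg ds e = ds ! i + 1 \<and> mwt ws e \<le> ws ! i - r}))"
proof -
  from assms obtain xs ds ws where "length ds = length xs" "length ws = length xs"
    and "\<forall>p n. W A p n = vs.span (mono A xs ` {e \<in> Adm ds. mdeg ds e = n \<and> mwt ws e \<le> p})"
    and dif_gen: "\<forall>i<length xs. dif A (xs ! i) \<in> vs.span (mono A xs `
       {e \<in> Adm ds. mdeg ds e = ds ! i + 1 \<and> mwt ws e \<le> ws ! i - r
                    \<and> (\<forall>j. i \<le> j \<and> j < length xs \<longrightarrow> e ! j = 0)})"
    unfolding Er_cofibrant_fg_def by (elim conjE exE)
  moreover have "dif A (xs ! i)
      \<in> vs.span (mono A xs ` {e \<in> Adm ds. mdeg ds e = ds ! i + 1 \<and> mwt ws e \<le> ws ! i - r})"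
    if "i < length xs" for i
  proof -
    have "mono A xs ` {e \<in> Adm ds. mdeg ds e = ds ! i + 1 \<and> mwt ws e \<le> ws ! i - r
                    \<and> (\<forall>j. i \<le> j \<and> j < length xs \<longrightarrow> e ! j = 0)}
        \<subseteq> mono A xs ` {e \<in> Adm ds. mdeg ds e = ds ! i + 1 \<and> mwt ws e \<le> ws ! i - r}"
      by blast
    then show ?thesis
      using dif_gen that vs.span_mono by blast
  qed
  ultimately show ?thesis
    by blast
qed

text \<open>Each generator x_i lies in W_{w_i} and d x_i in W_{w_i - r}. Products add weights, so every monomial of weight at most p, and hence
  all of W_p, is mapped by d into W_{p - r}.\<close>

lemma Er_cofibrant_fg_dif_W:
  assumes "Er_cofibrant_fg A r" "a \<in> W A p n"
  shows "dif A a \<in> W A (p - r) (n + 1)"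
proof -
  obtain xs ds ws where len: "length ds = length xs" "length ws = length xs"
    and W_span: "\<forall>p n. W A p n = vs.span (mono A xs ` {e \<in> Adm ds. mdeg ds e = n \<and> mwt ws e \<le> p})"
    and dif_gen: "\<forall>i<length xs. dif A (xs ! i)
       \<in> vs.span (mono A xs ` {e \<in> Adm ds. mdeg ds e = ds ! i + 1 \<and> mwt ws e \<le> ws ! i - r})"
    using Er_cofibrant_fg_generators[OF assms(1)] by (elim exE conjE)
  have gen_Zs: "xs ! i \<in> Zs A r (ws ! i) (ds ! i)" if i: "i < length xs" for i
  proof -
    let ?u = "(replicate (length xs) 0)[i := 1]"
    have "?u \<in> {e \<in> Adm ds. mdeg ds e = ds ! i \<and> mwt ws e \<le> ws ! i}"
      using i len unit_vector_sum[OF i] by (auto simp: Adm_def mdeg_def mwt_def nth_list_update)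
    then have "xs ! i \<in> W A (ws ! i) (ds ! i)"
      unfolding W_span[rule_format] mono_unit_vector[OF i, symmetric] by (intro vs.span_base imageI)
    then show ?thesis
      using dif_gen[rule_format, OF i] W_span[rule_format] by (simp add: Zs_def)
  qed
  let ?U = "{a. dif A a \<in> W A (p - r) (n + 1)}"
  have U: "vs.subspace ?U"
    unfolding vs.subspace_def using W_0 W_add W_scale by (auto simp: dif_add dif_scale dif.zero)
  have "mono A xs ` {e \<in> Adm ds. mdeg ds e = n \<and> mwt ws e \<le> p} \<subseteq> ?U"
  proof (rule image_subsetI)
    fix e assume "e \<in> {e \<in> Adm ds. mdeg ds e = n \<and> mwt ws e \<le> p}"
    then have e: "mdeg ds e = n" "mwt ws e \<le> p" by auto
    have "dif A (mono A xs e) \<in> W A (mwt ws e - r) (n + 1)"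
      using mono_Zs[OF len gen_Zs, of e] e(1) by (simp add: Zs_def)
    then show "mono A xs e \<in> ?U"
      using W_mono[of "mwt ws e - r" "p - r"] e(2) by auto
  qed
  then have "vs.span (mono A xs ` {e \<in> Adm ds. mdeg ds e = n \<and> mwt ws e \<le> p}) \<subseteq> ?U"
    by (rule vs.span_minimal[OF _ U])
  then show ?thesis
    using assms(2) W_span by blast
qed

end

section \<open>The E_r term of a pure filtered dga\<close>

text \<open>When d lowers weight by r on all of W, as it does for E_r-cofibrant dga's, the term
  E_r^{p,n} is simply W_p A^n / W_{p-1} A^n with the operations of the associated graded.\<close>

locale pure_fdga = filtered_dga A for A :: "('k::field, 'v::ab_group_add) fdga" +
  fixes r :: int
  assumes dif_lowers_weight: "a \<in> W A p n \<Longrightarrow> dif A a \<in> W A (p - r) (n + 1)"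
begin

lemma Zs_eq_W: "Zs A r p n = W A p n"
  unfolding Zs_def using dif_lowers_weight by blast

lemma Ddenom_eq_W: "Ddenom A r p n = W A (p - 1) n"
proof -
  have Zs_pred: "Zs A (r - 1) (p - 1) n = W A (p - 1) n"
    unfolding Zs_def using dif_lowers_weight W_mono[of "p - 1 - r" "p - 1 - (r - 1)" "n + 1"] by auto
  have Bs_W: "Bs A (r - 1) p n \<subseteq> W A (p - 1) n"
  proof
    fix a assume "a \<in> Bs A (r - 1) p n"
    then obtain b where "b \<in> W A (p + (r - 1)) (n - 1)" "a = dif A b"
      unfolding Bs_def by blast
    then show "a \<in> W A (p - 1) n"
      using dif_lowers_weight[of b "p + (r - 1)" "n - 1"] by simp
  qed
  have Bs_0: "0 \<in> Bs A (r - 1) p n"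
    unfolding Bs_def using W_0 dif.zero by (auto intro!: bexI[of _ 0])
  show ?thesis
  proof
    show "Ddenom A r p n \<subseteq> W A (p - 1) n"
      unfolding Ddenom_def Zs_pred using Bs_W W_add by blast
    show "W A (p - 1) n \<subseteq> Ddenom A r p n"
      unfolding Ddenom_def Zs_pred using Bs_0 by force
  qed
qed

lemma cls_mem: "x \<in> cls A r p n z \<longleftrightarrow> x - z \<in> W A (p - 1) n"
  unfolding cls_def Ddenom_eq_W by (auto intro: image_eqI[where x = "x - z"])

lemma cls_eq_iff: "cls A r p n a = cls A r p n b \<longleftrightarrow> a - b \<in> W A (p - 1) n"
proof
  assume "cls A r p n a = cls A r p n b"
  then show "a - b \<in> W A (p - 1) n"
    using cls_mem[of a p n a] cls_mem[of a p n b] W_0 by simp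
next
  assume ab: "a - b \<in> W A (p - 1) n"
  have "x - a \<in> W A (p - 1) n \<longleftrightarrow> x - b \<in> W A (p - 1) n" for x
    using W_add[OF _ ab, of "x - a"] W_diff[OF _ ab, of "x - b"] by auto
  then show "cls A r p n a = cls A r p n b"
    by (auto simp: cls_mem)
qed

lemma rep_cls: "rep (cls A r p n z) - z \<in> W A (p - 1) n"
proof -
  have "rep (cls A r p n z) \<in> cls A r p n z"
    unfolding rep_def by (rule someI[of _ z]) (simp add: cls_mem W_0)
  then show ?thesis
    by (simp add: cls_mem)
qed

lemma Ep_iff: "X \<in> Ep A r p n \<longleftrightarrow> (\<exists>z \<in> W A p n. X = cls A r p n z)"
  unfolding Ep_def Zs_eq_W by blast

lemma cls_in_Ep: "z \<in> W A p n \<Longrightarrow> cls A r p n z \<in> Ep A r p n"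
  using Ep_iff by blast

lemma EpE:
  assumes "X \<in> Ep A r p n"
  obtains z where "z \<in> W A p n" "X = cls A r p n z"
  using assms Ep_iff by blast

lemma E_add_cls: "E_add (cls A r p n a) (cls A r p n b) = cls A r p n (a + b)"
proof (rule set_eqI)
  fix x
  have "x \<in> E_add (cls A r p n a) (cls A r p n b) \<longleftrightarrow>
      (\<exists>x1 x2. x = x1 + x2 \<and> x1 - a \<in> W A (p - 1) n \<and> x2 - b \<in> W A (p - 1) n)"
    by (auto simp: E_add_def cls_mem)
  also have "\<dots> \<longleftrightarrow> x - (a + b) \<in> W A (p - 1) n"
  proof
    assume "\<exists>x1 x2. x = x1 + x2 \<and> x1 - a \<in> W A (p - 1) n \<and> x2 - b \<in> W A (p - 1) n"
    then obtain x1 x2 where "x = x1 + x2" "x1 - a \<in> W A (p - 1) n" "x2 - b \<in> W A (p - 1) n"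
      by blast
    then show "x - (a + b) \<in> W A (p - 1) n"
      using W_add[of "x1 - a" _ _ "x2 - b"] by (simp add: algebra_simps)
  next
    assume "x - (a + b) \<in> W A (p - 1) n"
    then show "\<exists>x1 x2. x = x1 + x2 \<and> x1 - a \<in> W A (p - 1) n \<and> x2 - b \<in> W A (p - 1) n"
      using W_0 by (intro exI[of _ a] exI[of _ "x - a"]) (simp add: algebra_simps)
  qed
  finally show "x \<in> E_add (cls A r p n a) (cls A r p n b) \<longleftrightarrow> x \<in> cls A r p n (a + b)"
    by (simp add: cls_mem)
qed

lemma E_smult_cls: "E_smult A r p n c (cls A r p n z) = cls A r p n (smult A c z)"
  using W_scale[OF rep_cls, of c]
  unfolding E_smult_def cls_eq_iff by (simp add: vs.scale_right_diff_distrib)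

lemma E_mul_cls:
  assumes a: "a \<in> W A p n" and b: "b \<in> W A p' n'"
  shows "E_mul A r (p + p') (n + n') (cls A r p n a) (cls A r p' n' b)
       = cls A r (p + p') (n + n') (mul A a b)"
proof -
  define u where "u = rep (cls A r p n a) - a"
  define v where "v = rep (cls A r p' n' b) - b"
  have u: "u \<in> W A (p - 1) n" and v: "v \<in> W A (p' - 1) n'"
    using rep_cls u_def v_def by auto
  have "mul A a v \<in> W A (p + p' - 1) (n + n')"
    using W_mul[OF a v] by (simp add: algebra_simps)
  moreover have "mul A u b \<in> W A (p + p' - 1) (n + n')"
    using W_mul[OF u b] by (simp add: algebra_simps)
  moreover have "mul A u v \<in> W A (p + p' - 1) (n + n')"
    using W_mul[OF u v] W_mono[of "p - 1 + (p' - 1)" "p + p' - 1"] by auto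
  moreover have "mul A (a + u) (b + v) - mul A a b = mul A a v + mul A u b + mul A u v"
    by (simp add: mul_add_left mul_add_right algebra_simps)
  ultimately have "mul A (a + u) (b + v) - mul A a b \<in> W A (p + p' - 1) (n + n')"
    using W_add by simp
  then show ?thesis
    unfolding E_mul_def cls_eq_iff u_def v_def by simp
qed

lemma E_d_cls:
  assumes "a \<in> W A p n"
  shows "E_d A r p n (cls A r p n a) = cls A r (p - r) (n + 1) (dif A a)"
  using dif_lowers_weight[OF rep_cls, of p n a]
  unfolding E_d_def cls_eq_iff by (simp add: dif.diff algebra_simps)

lemma bigrading_aut_cls:
  "bigrading_aut A r \<alpha> p n (cls A r p n z) = cls A r p n (smult A (\<alpha> powi (n * r + p)) z)"
  unfolding bigrading_aut_def E_smult_cls ..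

end

lemma pure_fdga_if_Er_cofibrant_fg:
  assumes "Er_cofibrant_fg A r"
  shows "pure_fdga A r"
proof -
  interpret filtered_dga A
    using assms unfolding Er_cofibrant_fg_def by unfold_locales blast
  show ?thesis
    by unfold_locales (rule Er_cofibrant_fg_dif_W[OF assms])
qed

lemma fdga_homD:
  assumes "fdga_hom A B f"
  shows fdga_hom_add: "f (u + v) = f u + f v"
    and fdga_hom_smult: "f (smult A c v) = smult B c (f v)"
    and fdga_hom_mul: "f (mul A u v) = mul B (f u) (f v)"
    and fdga_hom_dif: "f (dif A v) = dif B (f v)"
    and fdga_hom_W: "v \<in> W A p n \<Longrightarrow> f v \<in> W B p n"
  using assms unfolding fdga_hom_def by (simp_all add: image_subset_iff)

lemma Er_map_cls:
  assumes "pure_fdga A r" "pure_fdga B r"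
    and add: "\<And>u v. F (u + v) = F u + F v" and fil: "\<And>v p n. v \<in> W A p n \<Longrightarrow> F v \<in> W B p n"
  shows "Er_map A B r F p n (cls A r p n z) = cls B r p n (F z)"
proof -
  interpret a: pure_fdga A r by fact
  interpret b: pure_fdga B r by fact
  interpret F: additive F by standard (rule add)
  show ?thesis
    using fil[OF a.rep_cls, of p n z] unfolding Er_map_def b.cls_eq_iff by (simp add: F.diff)
qed

context pure_fdga
begin

lemma E_smult_in_Ep: "X \<in> Ep A r p n \<Longrightarrow> E_smult A r p n c X \<in> Ep A r p n"
  by (auto elim!: EpE simp: E_smult_cls intro!: cls_in_Ep W_scale)

lemma bigrading_aut_inverse:
  assumes "\<alpha> \<noteq> 0" "X \<in> Ep A r p n"
  shows "bigrading_aut A r (inverse \<alpha>) p n (bigrading_aut A r \<alpha> p n X) = X"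
  using assms by (auto elim!: EpE simp: bigrading_aut_cls power_int_inverse power_int_not_zero)

lemma Er_aut_bigrading_aut:
  assumes "\<alpha> \<noteq> 0"
  shows "Er_aut A r (bigrading_aut A r \<alpha>)"
proof -
  let ?\<phi> = "bigrading_aut A r \<alpha>"
  have "bij_betw (?\<phi> p n) (Ep A r p n) (Ep A r p n)" for p n
  proof (rule bij_betw_byWitness[where f' = "bigrading_aut A r (inverse \<alpha>) p n"])
    show "\<forall>X\<in>Ep A r p n. bigrading_aut A r (inverse \<alpha>) p n (?\<phi> p n X) = X"
      using bigrading_aut_inverse assms by blast
    show "\<forall>X\<in>Ep A r p n. ?\<phi> p n (bigrading_aut A r (inverse \<alpha>) p n X) = X"
      using bigrading_aut_inverse[of "inverse \<alpha>"] assms by simp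
    show "?\<phi> p n ` Ep A r p n \<subseteq> Ep A r p n" "bigrading_aut A r (inverse \<alpha>) p n ` Ep A r p n \<subseteq> Ep A r p n"
      by (auto simp: bigrading_aut_def E_smult_in_Ep)
  qed
  moreover have "?\<phi> (p + p') (n + n') (E_mul A r (p + p') (n + n') X Y)
        = E_mul A r (p + p') (n + n') (?\<phi> p n X) (?\<phi> p' n' Y)"
    if XY: "X \<in> Ep A r p n" "Y \<in> Ep A r p' n'" for p n p' n' X Y
  proof -
    obtain a where a: "a \<in> W A p n" "X = cls A r p n a"
      using XY(1) by (rule EpE)
    obtain b where b: "b \<in> W A p' n'" "Y = cls A r p' n' b"
      using XY(2) by (rule EpE)
    have "\<alpha> powi ((n + n') * r + (p + p')) = \<alpha> powi (n * r + p) * \<alpha> powi (n' * r + p')"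
      using assms by (simp add: power_int_add[symmetric] algebra_simps)
    then show ?thesis
      using a b by (simp add: E_mul_cls bigrading_aut_cls W_scale mul_scale_left mul_scale_right mult.commute)
  qed
  moreover have "?\<phi> (p - r) (n + 1) (E_d A r p n X) = E_d A r p n (?\<phi> p n X)"
    if X: "X \<in> Ep A r p n" for p n X
  proof -
    obtain z where "z \<in> W A p n" "X = cls A r p n z"
      using X by (rule EpE)
    moreover have exponent: "(n + 1) * r + (p - r) = n * r + p"
      by (simp add: algebra_simps)
    ultimately show ?thesis
      by (simp add: E_d_cls bigrading_aut_cls W_scale dif_scale exponent)
  qed
  ultimately show ?thesis
    unfolding Er_aut_def
    by (auto elim!: EpE simp: E_add_cls E_smult_cls E_one_def bigrading_aut_cls
        vs.scale_right_distrib mult.commute)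
qed

end

locale pure_fdga_hom = a: pure_fdga A r + b: pure_fdga B r
  for A :: "('k::field, 'v::ab_group_add) fdga" and B :: "('k, 'w::ab_group_add) fdga" and r +
  fixes f :: "'v \<Rightarrow> 'w"
  assumes hom: "fdga_hom A B f"
begin

sublocale f: additive f
  by standard (rule fdga_hom_add[OF hom])

lemma Er_map_f_cls: "Er_map A B r f p n (cls A r p n z) = cls B r p n (f z)"
  by (rule Er_map_cls) (fact a.pure_fdga_axioms b.pure_fdga_axioms fdga_homD[OF hom])+

lemma AutE_bigrading_aut:
  assumes "\<alpha> \<noteq> 0"
  shows "AutE A B r f (bigrading_aut A r \<alpha>) (bigrading_aut B r \<alpha>)"
  unfolding AutE_def using a.Er_aut_bigrading_aut[OF assms] b.Er_aut_bigrading_aut[OF assms]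
  by (auto elim!: a.EpE simp: a.bigrading_aut_cls b.bigrading_aut_cls Er_map_f_cls
      fdga_hom_smult[OF hom])

end

section \<open>Eigenspace splittings\<close>

lemma power_int_eq_1_imp_eq_0:
  fixes \<alpha> :: "'k::field"
  assumes "\<alpha> \<noteq> 0" and "\<forall>m::nat. 0 < m \<longrightarrow> \<alpha> ^ m \<noteq> 1" and "\<alpha> powi k = 1"
  shows "k = 0"
proof (rule ccontr)
  assume "k \<noteq> 0"
  then have "\<alpha> ^ nat \<bar>k\<bar> = 1"
    using assms(3) by (cases "k > 0") (auto simp: power_int_def power_inverse)
  then show False
    using assms(2) \<open>k \<noteq> 0\<close> by simp
qed

lemma (in vector_space) eigenvectors_independent:
  assumes add: "\<And>x y. F (x + y) = F x + F y" and scale: "\<And>c x. F (scale c x) = scale c (F x)"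
    and "finite P" and "inj_on c P" and "\<And>p. p \<in> P \<Longrightarrow> F (g p) = scale (c p) (g p)"
    and "sum g P = 0"
  shows "\<forall>p\<in>P. g p = 0"
  using assms(3-)
proof (induction P arbitrary: g rule: finite_induct)
  case (insert p0 P)
  interpret F: additive F by standard (rule add)
  have sum0: "g p0 + sum g P = 0"
    using insert by simp
  have "scale (c p0) (g p0) + (\<Sum>p\<in>P. scale (c p) (g p)) = 0"
    using arg_cong[OF sum0, of F] insert.prems(2) by (simp add: F.add F.zero F.sum)
  moreover have "scale (c p0) (g p0) + (\<Sum>p\<in>P. scale (c p0) (g p)) = 0"
    using arg_cong[OF sum0, of "scale (c p0)"] by (simp add: scale_right_distrib scale_sum_right)
  ultimately have "scale (c p0) (g p0) + (\<Sum>p\<in>P. scale (c p) (g p))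
      = scale (c p0) (g p0) + (\<Sum>p\<in>P. scale (c p0) (g p))"
    by simp
  then have "(\<Sum>p\<in>P. scale (c p) (g p)) = (\<Sum>p\<in>P. scale (c p0) (g p))"
    by (rule add_left_imp_eq)
  then have "(\<Sum>p\<in>P. scale (c p - c p0) (g p)) = 0"
    by (simp add: scale_left_diff_distrib sum_subtractf)
  moreover have "F (scale (c p - c p0) (g p)) = scale (c p) (scale (c p - c p0) (g p))"
    if "p \<in> P" for p
    using insert.prems(2) that by (simp add: scale mult.commute)
  ultimately have "\<forall>p\<in>P. scale (c p - c p0) (g p) = 0"
    using insert.IH[of "\<lambda>p. scale (c p - c p0) (g p)"] insert.prems(1) by simp
  moreover have "c p \<noteq> c p0" if "p \<in> P" for p
    using insert.prems(1) insert.hyps(2) that by (auto simp: inj_on_insert) (metis imageI)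
  ultimately have "\<forall>p\<in>P. g p = 0"
    by force
  then show ?case
    using sum0 by simp
qed simp

text \<open>A filtered automorphism lifting the bigrading automorphism with \<alpha> not a root of unity:
  in each degree n it acts on Gr_p^W by the scalars \<alpha>^(nr+p), which are pairwise distinct,
  so its eigenspaces split the filtration.\<close>

locale bigrading_lift = pure_fdga A r for A :: "('k::field, 'v::ab_group_add) fdga" and r +
  fixes F :: "'v \<Rightarrow> 'v" and \<alpha> :: 'k
  assumes hom: "fdga_hom A A F"
    and lifts: "z \<in> W A p n \<Longrightarrow> F z - smult A (\<alpha> powi (n * r + p)) z \<in> W A (p - 1) n"
    and nonzero: "\<alpha> \<noteq> 0" and not_root_of_unity: "\<forall>m::nat. 0 < m \<longrightarrow> \<alpha> ^ m \<noteq> 1"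
begin

definition eigenvalue :: "int \<Rightarrow> int \<Rightarrow> 'k" where
  "eigenvalue p n = \<alpha> powi (n * r + p)"

definition eigenpart :: "int \<Rightarrow> int \<Rightarrow> 'v set" where
  "eigenpart p n = {v \<in> W A p n. F v = smult A (eigenvalue p n) v}"

sublocale F: additive F
  by standard (rule fdga_hom_add[OF hom])

lemma eigenvalue_nonzero: "eigenvalue p n \<noteq> 0"
  unfolding eigenvalue_def using nonzero by (simp add: power_int_not_zero)

lemma inj_eigenvalue: "inj (\<lambda>p. eigenvalue p n)"
proof (rule injI)
  fix p q assume "eigenvalue p n = eigenvalue q n"
  then have "\<alpha> powi ((n * r + p) - (n * r + q)) = 1"
    using power_int_diff[of \<alpha> "n * r + p" "n * r + q"] nonzero eigenvalue_nonzero[of q n]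
    by (simp add: eigenvalue_def)
  then show "p = q"
    using power_int_eq_1_imp_eq_0[OF nonzero not_root_of_unity] by fastforce
qed

lemma eigenpart_W: "eigenpart p n \<subseteq> W A p n"
  unfolding eigenpart_def by blast

lemma eigenpart_subspace: "vs.subspace (eigenpart p n)"
  unfolding vs.subspace_def eigenpart_def
  using W_0 W_add W_scale
  by (auto simp: F.zero F.add fdga_hom_smult[OF hom] vs.scale_right_distrib mult.commute)

lemma eigenpart_dif:
  assumes "v \<in> eigenpart p n"
  shows "dif A v \<in> eigenpart (p - r) (n + 1)"
proof -
  have "eigenvalue (p - r) (n + 1) = eigenvalue p n"
    unfolding eigenvalue_def by (simp add: algebra_simps)
  then show ?thesis
    using assms dif_lowers_weight by (simp add: eigenpart_def fdga_hom_dif[OF hom] dif_scale)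
qed

lemma eigenpart_mul:
  assumes "a \<in> eigenpart p n" "b \<in> eigenpart p' n'"
  shows "mul A a b \<in> eigenpart (p + p') (n + n')"
proof -
  have "eigenvalue (p + p') (n + n') = eigenvalue p n * eigenvalue p' n'"
    unfolding eigenvalue_def using nonzero by (simp add: power_int_add[symmetric] algebra_simps)
  then show ?thesis
    using assms W_mul
    by (simp add: eigenpart_def fdga_hom_mul[OF hom] mul_scale_left mul_scale_right mult.commute)
qed

definition eigensums :: "int \<Rightarrow> int \<Rightarrow> 'v set" where
  "eigensums m n = {sum g P | g P. finite P \<and> P \<subseteq> {..m} \<and> (\<forall>p\<in>P. g p \<in> eigenpart p n)}"

lemma eigenpart_scale: "v \<in> eigenpart p n \<Longrightarrow> smult A c v \<in> eigenpart p n"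
  using vs.subspace_scale[OF eigenpart_subspace] .

lemma eigenpart_subset_W: "p \<le> m \<Longrightarrow> eigenpart p n \<subseteq> W A m n"
  using eigenpart_W W_mono by blast

lemma eigensums_subset_W: "eigensums m n \<subseteq> W A m n"
proof
  fix v assume "v \<in> eigensums m n"
  then obtain g P where P: "P \<subseteq> {..m}" "\<forall>p\<in>P. g p \<in> eigenpart p n" and "v = sum g P"
    unfolding eigensums_def by blast
  have "g p \<in> W A m n" if "p \<in> P" for p
  proof -
    have "p \<le> m"
      using P(1) that by auto
    then show ?thesis
      using P(2) that eigenpart_subset_W by blast
  qed
  then show "v \<in> W A m n"
    unfolding \<open>v = sum g P\<close> by (rule W_sum)
qed

lemma eigensums_insert:
  assumes "s \<in> eigenpart m n" "v \<in> eigensums (m - 1) n"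
  shows "s + v \<in> eigensums m n"
proof -
  obtain g P where P: "finite P" "P \<subseteq> {..m - 1}" "\<forall>p\<in>P. g p \<in> eigenpart p n" "v = sum g P"
    using assms(2) unfolding eigensums_def by blast
  have "m \<notin> P"
    using P(2) by auto
  then have "sum (g(m := s)) P = sum g P"
    by (intro sum.cong) auto
  then have "s + v = sum (g(m := s)) (insert m P)"
    using P(1,4) \<open>m \<notin> P\<close> by simp
  moreover have "\<forall>p\<in>insert m P. (g(m := s)) p \<in> eigenpart p n"
    using P(3) assms(1) by simp
  ultimately show ?thesis
    unfolding eigensums_def using P(1,2) by (intro CollectI exI[of _ "g(m := s)"] exI[of _ "insert m P"]) auto
qed

lemma eigenpart_correction:
  assumes v: "v \<in> W A m n" and P: "finite P" "P \<subseteq> {..<m}" "\<forall>p\<in>P. g p \<in> eigenpart p n"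
    and w: "F v - smult A (eigenvalue m n) v = sum g P"
  defines "h p \<equiv> smult A (inverse (eigenvalue p n - eigenvalue m n)) (g p)"
  shows "v - sum h P \<in> eigenpart m n"
proof -
  have h: "h p \<in> eigenpart p n" if "p \<in> P" for p
    unfolding h_def using P(3) that eigenpart_scale by blast
  have "h p \<in> W A m n" if "p \<in> P" for p
  proof -
    have "p \<le> m"
      using P(2) that by auto
    then show ?thesis
      using h[OF that] eigenpart_subset_W by blast
  qed
  then have "sum h P \<in> W A m n"
    by (rule W_sum)
  then have "v - sum h P \<in> W A m n"
    using v W_diff by blast
  moreover have "smult A (eigenvalue p n - eigenvalue m n) (h p) = g p" if "p \<in> P" for p
  proof -
    have "p \<noteq> m"
      using P(2) that by auto
    then have "eigenvalue p n \<noteq> eigenvalue m n"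
      using inj_eigenvalue[of n] by (auto dest: injD)
    then show ?thesis
      unfolding h_def by simp
  qed
  then have "F (sum h P) - smult A (eigenvalue m n) (sum h P) = sum g P"
    using h by (simp add: F.sum eigenpart_def vs.scale_sum_right vs.scale_left_diff_distrib
        sum_subtractf[symmetric])
  then have "F (v - sum h P) = smult A (eigenvalue m n) (v - sum h P)"
    using w by (simp add: F.diff vs.scale_right_diff_distrib algebra_simps)
  ultimately show ?thesis
    unfolding eigenpart_def by blast
qed

lemma W_subset_eigensums: "W A m n \<subseteq> eigensums m n"
proof -
  obtain q where q: "\<forall>p\<le>q. W A p n = {0}"
    using W_bounded_below by blast
  have zero: "0 \<in> eigensums m n" for m
    unfolding eigensums_def by (intro CollectI exI[of _ "\<lambda>_. 0"] exI[of _ "{}"]) simp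
  show ?thesis
  proof (cases "m \<le> q")
    case True
    then show ?thesis using q zero by simp
  next
    case False
    then have "q \<le> m"
      by simp
    then show ?thesis
    proof (induction m rule: int_ge_induct)
      case base
      then show ?case using q zero by simp
    next
      case (step m)
      show ?case
      proof
        fix v assume v: "v \<in> W A (m + 1) n"
        have "F v - smult A (eigenvalue (m + 1) n) v \<in> W A m n"
          using lifts[OF v] by (simp add: eigenvalue_def)
        then have "F v - smult A (eigenvalue (m + 1) n) v \<in> eigensums m n"
          using step.IH by blast
        then obtain g P where P: "finite P" "P \<subseteq> {..m}" "\<forall>p\<in>P. g p \<in> eigenpart p n"
            "F v - smult A (eigenvalue (m + 1) n) v = sum g P"
          unfolding eigensums_def by blast
        define h where "h p = smult A (inverse (eigenvalue p n - eigenvalue (m + 1) n)) (g p)" for p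
        have "v - sum h P \<in> eigenpart (m + 1) n"
          unfolding h_def using P v by (intro eigenpart_correction) auto
        moreover have "sum h P \<in> eigensums m n"
          unfolding eigensums_def using P(1,2)
          by (intro CollectI exI[of _ h] exI[of _ P]) (auto simp: h_def P(3) eigenpart_scale)
        ultimately show "v \<in> eigensums (m + 1) n"
          using eigensums_insert[of "v - sum h P" "m + 1" n "sum h P"] by simp
      qed
    qed
  qed
qed

lemma W_eq_eigensums: "W A m n = eigensums m n"
  using W_subset_eigensums eigensums_subset_W by blast

lemma eigenpart_spanning:
  "\<exists>g P. finite P \<and> (\<forall>i\<in>P. g i \<in> eigenpart (fst i) (snd i)) \<and> v = sum g P"
proof -
  obtain gd Q where Q: "finite Q" "\<forall>n\<in>Q. gd n \<in> deg A n" "v = sum gd Q"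
    using deg_spanning by blast
  have "\<forall>n\<in>Q. \<exists>h P. finite P \<and> (\<forall>p\<in>P. h p \<in> eigenpart p n) \<and> gd n = sum h P"
  proof
    fix n assume "n \<in> Q"
    then obtain p where "gd n \<in> W A p n"
      using Q(2) W_exhaustive by blast
    then have "gd n \<in> eigensums p n"
      using W_subset_eigensums by blast
    then show "\<exists>h P. finite P \<and> (\<forall>p\<in>P. h p \<in> eigenpart p n) \<and> gd n = sum h P"
      unfolding eigensums_def by blast
  qed
  then obtain H where "\<forall>n\<in>Q. \<exists>P. finite P \<and> (\<forall>p\<in>P. H n p \<in> eigenpart p n) \<and> gd n = sum (H n) P"
    by (rule bchoice[THEN exE])
  then obtain PP where PP: "\<forall>n\<in>Q. finite (PP n) \<and> (\<forall>p\<in>PP n. H n p \<in> eigenpart p n)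
      \<and> gd n = sum (H n) (PP n)"
    by (rule bchoice[THEN exE])
  define G where "G i = H (snd i) (fst i)" for i :: "int \<times> int"
  have "v = (\<Sum>n\<in>Q. sum (H n) (PP n))"
    unfolding Q(3) using PP by (intro sum.cong) auto
  also have "\<dots> = (\<Sum>(n, p)\<in>(SIGMA n:Q. PP n). H n p)"
    using Q(1) PP by (intro sum.Sigma) auto
  also have "\<dots> = sum G (prod.swap ` (SIGMA n:Q. PP n))"
    unfolding G_def by (subst sum.reindex) (auto simp: case_prod_beta)
  finally show ?thesis
    using Q(1) PP unfolding G_def
    by (intro exI[of _ G] exI[of _ "prod.swap ` (SIGMA n:Q. PP n)"]) (auto simp: G_def)
qed

lemma eigenpart_independent:
  assumes P: "finite P" "\<forall>i\<in>P. g i \<in> eigenpart (fst i) (snd i)" "sum g P = 0"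
    and i0: "i0 \<in> P"
  shows "g i0 = 0"
proof -
  define n0 where "n0 = snd i0"
  define Pn where "Pn = {i \<in> P. snd i = n0}"
  have deg: "(\<Sum>i\<in>{i \<in> P. snd i = n}. g i) \<in> deg A n" for n
  proof (rule vs.subspace_sum[OF deg_subspace])
    fix i assume "i \<in> {i \<in> P. snd i = n}"
    then show "g i \<in> deg A n"
      using P(2) eigenpart_W W_subset_deg by fastforce
  qed
  have sum0: "(\<Sum>n\<in>snd ` P. \<Sum>i\<in>{i \<in> P. snd i = n}. g i) = 0"
    using P(1,3) by (subst sum.group) auto
  have "\<forall>n\<in>snd ` P. (\<Sum>i\<in>{i \<in> P. snd i = n}. g i) = 0"
    by (rule deg_independent[OF _ _ sum0]) (use deg P(1) in auto)
  then have "sum g Pn = 0"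
    unfolding Pn_def n0_def using i0 by blast
  moreover have "inj_on fst Pn"
    unfolding Pn_def by (auto intro!: inj_onI prod_eqI)
  moreover have "sum g Pn = (\<Sum>p\<in>fst ` Pn. g (p, n0))"
    using calculation(2) by (subst sum.reindex) (auto simp: Pn_def intro!: sum.cong)
  ultimately have "(\<Sum>p\<in>fst ` Pn. g (p, n0)) = 0"
    by simp
  moreover have "F (g (p, n0)) = smult A (eigenvalue p n0) (g (p, n0))" if "p \<in> fst ` Pn" for p
    using that P(2) unfolding Pn_def eigenpart_def by force
  moreover have "finite (fst ` Pn)"
    unfolding Pn_def using P(1) by simp
  moreover have "inj_on (\<lambda>p. eigenvalue p n0) (fst ` Pn)"
    using inj_eigenvalue[of n0] by (rule inj_on_subset) simp
  ultimately have "\<forall>p\<in>fst ` Pn. g (p, n0) = 0"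
    by (intro vs.eigenvectors_independent[OF F.add fdga_hom_smult[OF hom]])
  moreover have "fst i0 \<in> fst ` Pn"
    using i0 unfolding Pn_def n0_def by auto
  ultimately have "g (fst i0, n0) = 0"
    by blast
  then show ?thesis
    unfolding n0_def by simp
qed

lemma r_splitting_eigenpart: "r_splitting A r eigenpart"
  unfolding r_splitting_def
proof (intro conjI allI impI)
  show "vs.subspace (eigenpart p n)" for p n
    by (rule eigenpart_subspace)
  show "\<exists>g P. finite P \<and> (\<forall>i\<in>P. g i \<in> eigenpart (fst i) (snd i)) \<and> v = sum g P" for v
    by (rule eigenpart_spanning)
  show "\<forall>i\<in>P. g i = 0" if "finite P \<and> (\<forall>i\<in>P. g i \<in> eigenpart (fst i) (snd i)) \<and> sum g P = 0" for g P
    using eigenpart_independent that by blast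
  show "dif A ` eigenpart p n \<subseteq> eigenpart (p - r) (n + 1)" for p n
    using eigenpart_dif by blast
  show "mul A a b \<in> eigenpart (p + p') (n + n')"
    if "a \<in> eigenpart p n" "b \<in> eigenpart p' n'" for p n p' n' a b
    using eigenpart_mul that by blast
  show "W A m n = {sum g P |g P. finite P \<and> P \<subseteq> {..m} \<and> (\<forall>p\<in>P. g p \<in> eigenpart p n)}" for m n
    using W_eq_eigensums unfolding eigensums_def .
qed

end

context pure_fdga
begin

lemma bigrading_liftI:
  assumes F: "fil_aut A F" and induces: "Er_induces A r F (bigrading_aut A r \<alpha>)"
    and "\<alpha> \<noteq> 0" and "\<forall>m::nat. 0 < m \<longrightarrow> \<alpha> ^ m \<noteq> 1"
  shows "bigrading_lift A r F \<alpha>"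
proof (unfold_locales)
  have hom: "fdga_hom A A F"
    using F unfolding fil_aut_def by blast
  then show "fdga_hom A A F" .
  show "F z - smult A (\<alpha> powi (n * r + p)) z \<in> W A (p - 1) n" if z: "z \<in> W A p n" for z p n
  proof -
    have "cls A r p n (F z) = Er_map A A r F p n (cls A r p n z)"
      using Er_map_cls[OF pure_fdga_axioms pure_fdga_axioms fdga_hom_add[OF hom] fdga_hom_W[OF hom]] by simp
    also have "\<dots> = cls A r p n (smult A (\<alpha> powi (n * r + p)) z)"
      using induces cls_in_Ep[OF z] unfolding Er_induces_def by (simp add: bigrading_aut_cls)
    finally show ?thesis
      unfolding cls_eq_iff .
  qed
qed fact+

end

section \<open>Lifting automorphisms of E_r through a splitting\<close>

locale split_pure_fdga = pure_fdga A r for A :: "('k::field, 'v::ab_group_add) fdga" and r +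
  fixes S :: "int \<Rightarrow> int \<Rightarrow> 'v set"
  assumes r_splitting: "r_splitting A r S"
begin

lemma S_subspace: "vs.subspace (S p n)"
  using r_splitting unfolding r_splitting_def by (elim conjE) simp

lemma S_spanning: "\<exists>g P. finite P \<and> (\<forall>i\<in>P. g i \<in> S (fst i) (snd i)) \<and> v = sum g P"
  using r_splitting unfolding r_splitting_def by (elim conjE) simp

lemma S_independent:
  "finite P \<Longrightarrow> \<forall>i\<in>P. g i \<in> S (fst i) (snd i) \<Longrightarrow> sum g P = 0 \<Longrightarrow> \<forall>i\<in>P. g i = 0"
  using r_splitting unfolding r_splitting_def by (elim conjE) simp

lemma S_dif: "s \<in> S p n \<Longrightarrow> dif A s \<in> S (p - r) (n + 1)"
  using r_splitting unfolding r_splitting_def by (elim conjE) (simp add: image_subset_iff)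

lemma S_mul: "a \<in> S p n \<Longrightarrow> b \<in> S p' n' \<Longrightarrow> mul A a b \<in> S (p + p') (n + n')"
  using r_splitting unfolding r_splitting_def by (elim conjE) simp

lemma W_eq_S_sums: "W A m n = {sum g P | g P. finite P \<and> P \<subseteq> {..m} \<and> (\<forall>p\<in>P. g p \<in> S p n)}"
  using r_splitting unfolding r_splitting_def by (elim conjE) simp

lemmas S_0 = vs.subspace_0[OF S_subspace]
lemmas S_add = vs.subspace_add[OF S_subspace]
lemmas S_diff = vs.subspace_diff[OF S_subspace]
lemmas S_scale = vs.subspace_scale[OF S_subspace]

lemma S_W: "S p n \<subseteq> W A p n"
proof
  fix s assume "s \<in> S p n"
  then have "sum (\<lambda>_. s) {p} \<in> W A p n"
    unfolding W_eq_S_sums by (intro CollectI exI[of _ "\<lambda>_. s"] exI[of _ "{p}"]) simp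
  then show "s \<in> W A p n"
    by simp
qed

lemma W_split:
  assumes "z \<in> W A p n"
  obtains s where "s \<in> S p n" "z - s \<in> W A (p - 1) n"
proof -
  obtain g P where P: "finite P" "P \<subseteq> {..p}" "\<forall>q\<in>P. g q \<in> S q n" "z = sum g P"
    using assms unfolding W_eq_S_sums by blast
  define s where "s = (if p \<in> P then g p else 0)"
  have "s \<in> S p n"
    unfolding s_def using P(3) S_0 by auto
  moreover have "z - s = sum g (P - {p})"
    unfolding P(4) s_def using P(1) by (simp add: sum_diff1)
  moreover have "sum g (P - {p}) \<in> W A (p - 1) n"
    unfolding W_eq_S_sums using P(1-3)
    by (intro CollectI exI[of _ g] exI[of _ "P - {p}"]) auto
  ultimately show ?thesis
    using that by simp
qed

lemma S_eq_if_W_pred: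
  assumes s1: "s1 \<in> S p n" and s2: "s2 \<in> S p n" and "s1 - s2 \<in> W A (p - 1) n"
  shows "s1 = s2"
proof -
  obtain g P where P: "finite P" "P \<subseteq> {..p - 1}" "\<forall>q\<in>P. g q \<in> S q n" "s1 - s2 = sum g P"
    using assms(3) unfolding W_eq_S_sums by blast
  have "p \<notin> P"
    using P(2) by auto
  define h where "h i = (if i = (p, n) then s1 - s2 else - g (fst i))" for i
  define Q where "Q = insert (p, n) ((\<lambda>q. (q, n)) ` P)"
  have "sum h ((\<lambda>q. (q, n)) ` P) = - sum g P"
    using \<open>p \<notin> P\<close>
    by (subst sum.reindex) (auto intro: inj_onI simp: h_def sum_negf[symmetric] intro!: sum.cong)
  moreover have "(p, n) \<notin> (\<lambda>q. (q, n)) ` P"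
    using \<open>p \<notin> P\<close> by auto
  ultimately have "sum h Q = 0"
    unfolding Q_def using P(1,4) by (simp add: h_def)
  moreover have "\<forall>i\<in>Q. h i \<in> S (fst i) (snd i)"
    unfolding Q_def h_def using S_diff[OF s1 s2] P(3) vs.subspace_neg[OF S_subspace] by auto
  moreover have "finite Q"
    unfolding Q_def using P(1) by simp
  ultimately have "h (p, n) = 0"
    using S_independent unfolding Q_def by blast
  then show ?thesis
    by (simp add: h_def)
qed

lemma cls_inj_on_S:
  "s1 \<in> S p n \<Longrightarrow> s2 \<in> S p n \<Longrightarrow> cls A r p n s1 = cls A r p n s2 \<Longrightarrow> s1 = s2"
  using S_eq_if_W_pred cls_eq_iff by blast

lemma Ep_S:
  assumes "X \<in> Ep A r p n"
  obtains s where "s \<in> S p n" "X = cls A r p n s"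
proof -
  obtain z where z: "z \<in> W A p n" "X = cls A r p n z"
    using assms by (rule EpE)
  obtain s where "s \<in> S p n" "z - s \<in> W A (p - 1) n"
    using z(1) by (rule W_split)
  then show ?thesis
    using that z(2) cls_eq_iff by blast
qed

lemma cls_S_in_Ep: "s \<in> S p n \<Longrightarrow> cls A r p n s \<in> Ep A r p n"
  using S_W cls_in_Ep by blast

definition pieces :: "'v \<Rightarrow> (int \<times> int \<Rightarrow> 'v) \<times> (int \<times> int) set" where
  "pieces v = (SOME (g, P). finite P \<and> (\<forall>i\<in>P. g i \<in> S (fst i) (snd i)) \<and> v = sum g P)"

definition extend_by_pieces :: "(int \<Rightarrow> int \<Rightarrow> 'v \<Rightarrow> 'b::ab_group_add) \<Rightarrow> 'v \<Rightarrow> 'b" where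
  "extend_by_pieces \<phi> v = (\<Sum>i\<in>snd (pieces v). \<phi> (fst i) (snd i) (fst (pieces v) i))"

lemma pieces_decomposition:
  "finite (snd (pieces v)) \<and> (\<forall>i\<in>snd (pieces v). fst (pieces v) i \<in> S (fst i) (snd i))
    \<and> sum (fst (pieces v)) (snd (pieces v)) = v"
proof -
  obtain g P where "finite P \<and> (\<forall>i\<in>P. g i \<in> S (fst i) (snd i)) \<and> v = sum g P"
    using S_spanning by blast
  then have "(\<lambda>(g, P). finite P \<and> (\<forall>i\<in>P. g i \<in> S (fst i) (snd i)) \<and> v = sum g P) (g, P)"
    by simp
  then have "(\<lambda>(g, P). finite P \<and> (\<forall>i\<in>P. g i \<in> S (fst i) (snd i)) \<and> v = sum g P) (pieces v)"
    unfolding pieces_def by (rule someI)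
  then show ?thesis
    by (auto simp: case_prod_beta)
qed

lemma pieces_unique:
  assumes P: "finite P" "\<forall>i\<in>P. g i \<in> S (fst i) (snd i)"
    and Q: "finite Q" "\<forall>i\<in>Q. h i \<in> S (fst i) (snd i)"
    and eq: "sum g P = sum h Q"
  shows "(if i \<in> P then g i else 0) = (if i \<in> Q then h i else 0)"
proof (cases "i \<in> P \<union> Q")
  case True
  define g' where "g' j = (if j \<in> P then g j else 0)" for j
  define h' where "h' j = (if j \<in> Q then h j else 0)" for j
  have "sum g' (P \<union> Q) = sum g P" "sum h' (P \<union> Q) = sum h Q"
    unfolding g'_def h'_def using P(1) Q(1) by (simp_all add: sum.If_cases Int_absorb1 Int_absorb2)
  then have "(\<Sum>j\<in>P \<union> Q. g' j - h' j) = 0"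
    using eq by (simp add: sum_subtractf)
  moreover have "g' j - h' j \<in> S (fst j) (snd j)" for j
    unfolding g'_def h'_def using P(2) Q(2) S_0 by (intro S_diff) auto
  ultimately have "g' i - h' i = 0"
    using S_independent[of "P \<union> Q" "\<lambda>j. g' j - h' j"] P(1) Q(1) True by blast
  then show ?thesis
    unfolding g'_def h'_def by simp
qed simp

lemma extend_by_pieces_sum:
  assumes zero: "\<And>p n. \<phi> p n 0 = 0" and P: "finite P" "\<forall>i\<in>P. g i \<in> S (fst i) (snd i)"
  shows "extend_by_pieces \<phi> (sum g P) = (\<Sum>i\<in>P. \<phi> (fst i) (snd i) (g i))"
proof -
  define g0 where "g0 = fst (pieces (sum g P))"
  define P0 where "P0 = snd (pieces (sum g P))"
  have P0: "finite P0" "\<forall>i\<in>P0. g0 i \<in> S (fst i) (snd i)" "sum g0 P0 = sum g P"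
    using pieces_decomposition[of "sum g P"] unfolding g0_def P0_def by simp_all
  have pad: "(\<Sum>i\<in>R. \<phi> (fst i) (snd i) (if i \<in> X then x i else 0)) = (\<Sum>i\<in>X. \<phi> (fst i) (snd i) (x i))"
    if "finite R" "X \<subseteq> R" for R X x
    using that zero by (intro sum.mono_neutral_cong_right) auto
  have "extend_by_pieces \<phi> (sum g P) = (\<Sum>i\<in>P0 \<union> P. \<phi> (fst i) (snd i) (if i \<in> P0 then g0 i else 0))"
    unfolding extend_by_pieces_def g0_def[symmetric] P0_def[symmetric] using P0(1) P(1) by (simp add: pad)
  also have "\<dots> = (\<Sum>i\<in>P0 \<union> P. \<phi> (fst i) (snd i) (if i \<in> P then g i else 0))"
    using pieces_unique[OF P0(1,2) P P0(3)] by simp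
  also have "\<dots> = (\<Sum>i\<in>P. \<phi> (fst i) (snd i) (g i))"
    using P0(1) P(1) by (simp add: pad)
  finally show ?thesis .
qed

end

text \<open>Through the splitting, S p n is a copy of E_r^{p,n}; an automorphism G of E_r(A) is
  transported to each S p n and extended additively to A.\<close>

locale Er_aut_lift = split_pure_fdga A r S
  for A :: "('k::field, 'v::ab_group_add) fdga" and r and S +
  fixes G :: "int \<Rightarrow> int \<Rightarrow> 'v set \<Rightarrow> 'v set"
  assumes Er_aut: "Er_aut A r G"
begin

lemma G_bij: "bij_betw (G p n) (Ep A r p n) (Ep A r p n)"
  using Er_aut unfolding Er_aut_def by (elim conjE) simp

lemma G_add: "X \<in> Ep A r p n \<Longrightarrow> Y \<in> Ep A r p n \<Longrightarrow> G p n (E_add X Y) = E_add (G p n X) (G p n Y)"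
  using Er_aut unfolding Er_aut_def by (elim conjE) simp

lemma G_smult: "X \<in> Ep A r p n \<Longrightarrow> G p n (E_smult A r p n c X) = E_smult A r p n c (G p n X)"
  using Er_aut unfolding Er_aut_def by (elim conjE) simp

lemma G_mul: "X \<in> Ep A r p n \<Longrightarrow> Y \<in> Ep A r p' n' \<Longrightarrow>
    G (p + p') (n + n') (E_mul A r (p + p') (n + n') X Y) = E_mul A r (p + p') (n + n') (G p n X) (G p' n' Y)"
  using Er_aut unfolding Er_aut_def by (elim conjE) simp

lemma G_d: "X \<in> Ep A r p n \<Longrightarrow> G (p - r) (n + 1) (E_d A r p n X) = E_d A r p n (G p n X)"
  using Er_aut unfolding Er_aut_def by (elim conjE) simp

definition transport :: "int \<Rightarrow> int \<Rightarrow> 'v \<Rightarrow> 'v" where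
  "transport p n s = (THE t. t \<in> S p n \<and> cls A r p n t = G p n (cls A r p n s))"

lemma transport:
  assumes "s \<in> S p n"
  shows "transport p n s \<in> S p n" "cls A r p n (transport p n s) = G p n (cls A r p n s)"
proof -
  have "G p n (cls A r p n s) \<in> Ep A r p n"
    using G_bij cls_S_in_Ep[OF assms] bij_betwE by blast
  then obtain t where "t \<in> S p n" "G p n (cls A r p n s) = cls A r p n t"
    by (rule Ep_S)
  then have "\<exists>!t. t \<in> S p n \<and> cls A r p n t = G p n (cls A r p n s)"
    using cls_inj_on_S by auto
  then have "transport p n s \<in> S p n \<and> cls A r p n (transport p n s) = G p n (cls A r p n s)"
    unfolding transport_def by (rule theI')
  then show "transport p n s \<in> S p n" "cls A r p n (transport p n s) = G p n (cls A r p n s)"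
    by auto
qed

lemma transport_eqI:
  assumes "s \<in> S p n" "t \<in> S p n" "cls A r p n t = G p n (cls A r p n s)"
  shows "transport p n s = t"
  using cls_inj_on_S[OF transport(1)[OF assms(1)] assms(2)] transport(2)[OF assms(1)] assms(3)
  by simp

lemma transport_add:
  assumes "a \<in> S p n" "b \<in> S p n"
  shows "transport p n (a + b) = transport p n a + transport p n b"
  using assms transport[OF assms(1)] transport[OF assms(2)]
  by (intro transport_eqI) (auto simp: S_add E_add_cls[symmetric] G_add cls_S_in_Ep)

lemma transport_0: "transport p n 0 = 0"
  using transport_add[OF S_0 S_0, of p n] by simp

lemma transport_scale:
  assumes "a \<in> S p n"
  shows "transport p n (smult A c a) = smult A c (transport p n a)"
  using assms transport[OF assms]
  by (intro transport_eqI) (auto simp: S_scale E_smult_cls[symmetric] G_smult cls_S_in_Ep)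

lemma transport_mul:
  assumes "a \<in> S p n" "b \<in> S p' n'"
  shows "transport (p + p') (n + n') (mul A a b) = mul A (transport p n a) (transport p' n' b)"
proof (rule transport_eqI)
  show "mul A a b \<in> S (p + p') (n + n')" "mul A (transport p n a) (transport p' n' b) \<in> S (p + p') (n + n')"
    using S_mul assms transport(1) by blast+
  have "a \<in> W A p n" "b \<in> W A p' n'" "transport p n a \<in> W A p n" "transport p' n' b \<in> W A p' n'"
    using assms transport(1) S_W by blast+
  then show "cls A r (p + p') (n + n') (mul A (transport p n a) (transport p' n' b))
      = G (p + p') (n + n') (cls A r (p + p') (n + n') (mul A a b))"
    using assms by (simp add: E_mul_cls[symmetric] transport(2) G_mul cls_S_in_Ep)
qed

lemma transport_dif:
  assumes "a \<in> S p n"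
  shows "transport (p - r) (n + 1) (dif A a) = dif A (transport p n a)"
proof (rule transport_eqI)
  show "dif A a \<in> S (p - r) (n + 1)" "dif A (transport p n a) \<in> S (p - r) (n + 1)"
    using S_dif assms transport(1) by blast+
  have "a \<in> W A p n" "transport p n a \<in> W A p n"
    using assms transport(1) S_W by blast+
  then show "cls A r (p - r) (n + 1) (dif A (transport p n a))
      = G (p - r) (n + 1) (cls A r (p - r) (n + 1) (dif A a))"
    using assms by (simp add: E_d_cls[symmetric] transport(2) G_d cls_S_in_Ep)
qed

lemma bij_betw_transport: "bij_betw (transport p n) (S p n) (S p n)"
proof (rule bij_betw_imageI)
  show "inj_on (transport p n) (S p n)"
  proof (rule inj_onI)
    fix a b assume a: "a \<in> S p n" and b: "b \<in> S p n" and "transport p n a = transport p n b"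
    then have "G p n (cls A r p n a) = G p n (cls A r p n b)"
      using transport(2) by metis
    then have "cls A r p n a = cls A r p n b"
      by (rule inj_onD[OF bij_betw_imp_inj_on[OF G_bij] _ cls_S_in_Ep[OF a] cls_S_in_Ep[OF b]])
    then show "a = b"
      using cls_inj_on_S a b by blast
  qed
  show "transport p n ` S p n = S p n"
  proof
    show "transport p n ` S p n \<subseteq> S p n"
      using transport(1) by blast
    show "S p n \<subseteq> transport p n ` S p n"
    proof
      fix t assume t: "t \<in> S p n"
      then have "cls A r p n t \<in> G p n ` Ep A r p n"
        using bij_betw_imp_surj_on[OF G_bij] cls_S_in_Ep by blast
      then obtain s where "s \<in> S p n" "cls A r p n t = G p n (cls A r p n s)"
        by (auto elim: Ep_S)
      then show "t \<in> transport p n ` S p n"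
        using transport_eqI t by blast
    qed
  qed
qed

definition lift :: "'v \<Rightarrow> 'v" where
  "lift = extend_by_pieces transport"

lemma lift_sum:
  "finite P \<Longrightarrow> \<forall>i\<in>P. g i \<in> S (fst i) (snd i) \<Longrightarrow> lift (sum g P) = (\<Sum>i\<in>P. transport (fst i) (snd i) (g i))"
  unfolding lift_def by (rule extend_by_pieces_sum) (simp_all add: transport_0)

lemma lift_S: "s \<in> S p n \<Longrightarrow> lift s = transport p n s"
  using lift_sum[of "{(p, n)}" "\<lambda>_. s"] by simp

lemma piecesE:
  obtains g P where "finite P" "\<forall>i\<in>P. g i \<in> S (fst i) (snd i)" "v = sum g P"
  using S_spanning by blast

lemma lift_add: "lift (u + v) = lift u + lift v"
proof -
  obtain g P where P: "finite P" "\<forall>i\<in>P. g i \<in> S (fst i) (snd i)" "u = sum g P"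
    by (rule piecesE)
  obtain h Q where Q: "finite Q" "\<forall>i\<in>Q. h i \<in> S (fst i) (snd i)" "v = sum h Q"
    by (rule piecesE)
  define g' where "g' i = (if i \<in> P then g i else 0)" for i
  define h' where "h' i = (if i \<in> Q then h i else 0)" for i
  have R: "finite (P \<union> Q)"
    using P(1) Q(1) by simp
  have u: "u = sum g' (P \<union> Q)" and v: "v = sum h' (P \<union> Q)"
    unfolding g'_def h'_def P(3) Q(3) using P(1) Q(1)
    by (simp_all add: sum.If_cases Int_absorb1 Int_absorb2)
  have g': "\<forall>i\<in>P \<union> Q. g' i \<in> S (fst i) (snd i)" and h': "\<forall>i\<in>P \<union> Q. h' i \<in> S (fst i) (snd i)"
    unfolding g'_def h'_def using P(2) Q(2) S_0 by auto
  have "lift (u + v) = lift (\<Sum>i\<in>P \<union> Q. g' i + h' i)"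
    unfolding u v by (simp add: sum.distrib)
  also have "\<dots> = (\<Sum>i\<in>P \<union> Q. transport (fst i) (snd i) (g' i + h' i))"
    using g' h' S_add by (intro lift_sum[OF R]) blast
  also have "\<dots> = (\<Sum>i\<in>P \<union> Q. transport (fst i) (snd i) (g' i) + transport (fst i) (snd i) (h' i))"
    using g' h' by (intro sum.cong) (auto simp: transport_add)
  also have "\<dots> = lift u + lift v"
    unfolding u v lift_sum[OF R g'] lift_sum[OF R h'] by (simp add: sum.distrib)
  finally show ?thesis .
qed

sublocale lift: additive lift
  by standard (rule lift_add)

lemma lift_scale: "lift (smult A c u) = smult A c (lift u)"
proof -
  obtain g P where P: "finite P" "\<forall>i\<in>P. g i \<in> S (fst i) (snd i)" "u = sum g P"
    by (rule piecesE)
  have piece: "lift (smult A c s) = smult A c (lift s)" if "s \<in> S p n" for s p n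
    using lift_S[OF S_scale[OF that]] lift_S[OF that] transport_scale[OF that] by simp
  have "lift (smult A c u) = (\<Sum>i\<in>P. lift (smult A c (g i)))"
    unfolding P(3) by (simp add: vs.scale_sum_right lift.sum)
  also have "\<dots> = smult A c (lift u)"
    unfolding P(3) lift.sum vs.scale_sum_right using P(2) piece by (intro sum.cong) auto
  finally show ?thesis .
qed

lemma lift_mul: "lift (mul A u v) = mul A (lift u) (lift v)"
proof -
  obtain g P where P: "finite P" "\<forall>i\<in>P. g i \<in> S (fst i) (snd i)" "u = sum g P"
    by (rule piecesE)
  obtain h Q where Q: "finite Q" "\<forall>i\<in>Q. h i \<in> S (fst i) (snd i)" "v = sum h Q"
    by (rule piecesE)
  have piece: "lift (mul A s t) = mul A (lift s) (lift t)" if "s \<in> S p n" "t \<in> S p' n'" for s t p n p' n'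
    using lift_S[OF S_mul[OF that]] lift_S[OF that(1)] lift_S[OF that(2)] transport_mul[OF that]
    by simp
  have "lift (mul A u v) = (\<Sum>j\<in>Q. \<Sum>i\<in>P. lift (mul A (g i) (h j)))"
    unfolding P(3) Q(3) mul_sum_left mul_sum_right lift.sum ..
  also have "\<dots> = mul A (lift u) (lift v)"
    unfolding P(3) Q(3) lift.sum mul_sum_left mul_sum_right using P(2) Q(2) piece
    by (intro sum.cong refl) blast
  finally show ?thesis .
qed

lemma lift_dif: "lift (dif A u) = dif A (lift u)"
proof -
  obtain g P where P: "finite P" "\<forall>i\<in>P. g i \<in> S (fst i) (snd i)" "u = sum g P"
    by (rule piecesE)
  have piece: "lift (dif A s) = dif A (lift s)" if "s \<in> S p n" for s p n
    using lift_S[OF S_dif[OF that]] lift_S[OF that] transport_dif[OF that] by simp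
  have "lift (dif A u) = (\<Sum>i\<in>P. lift (dif A (g i)))"
    unfolding P(3) by (simp add: dif.sum lift.sum)
  also have "\<dots> = dif A (lift u)"
    unfolding P(3) lift.sum dif.sum using P(2) piece by (intro sum.cong) auto
  finally show ?thesis .
qed

definition untransport :: "int \<Rightarrow> int \<Rightarrow> 'v \<Rightarrow> 'v" where
  "untransport p n = the_inv_into (S p n) (transport p n)"

lemma untransport:
  assumes "t \<in> S p n"
  shows "untransport p n t \<in> S p n" "transport p n (untransport p n t) = t"
  unfolding untransport_def
  using bij_betwE[OF bij_betw_the_inv_into[OF bij_betw_transport]] assms
    f_the_inv_into_f_bij_betw[OF bij_betw_transport assms] by blast+

lemma lift_untransport: "t \<in> S p n \<Longrightarrow> lift (untransport p n t) = t"
  using lift_S[OF untransport(1)] untransport(2) by simp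

lemma lift_W_subset: "v \<in> W A p n \<Longrightarrow> lift v \<in> W A p n"
proof -
  assume "v \<in> W A p n"
  then obtain g P where P: "finite P" "P \<subseteq> {..p}" "\<forall>q\<in>P. g q \<in> S q n" "v = sum g P"
    unfolding W_eq_S_sums by blast
  have "lift v = (\<Sum>q\<in>P. transport q n (g q))"
    unfolding P(4) lift.sum using P(3) by (intro sum.cong) (auto simp: lift_S)
  also have "\<dots> \<in> W A p n"
    unfolding W_eq_S_sums using P(1-3) transport(1)
    by (intro CollectI exI[of _ "\<lambda>q. transport q n (g q)"] exI[of _ P]) auto
  finally show "lift v \<in> W A p n" .
qed

lemma W_subset_lift_W: "w \<in> W A p n \<Longrightarrow> w \<in> lift ` W A p n"
proof -
  assume "w \<in> W A p n"
  then obtain g P where P: "finite P" "P \<subseteq> {..p}" "\<forall>q\<in>P. g q \<in> S q n" "w = sum g P"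
    unfolding W_eq_S_sums by blast
  define t where "t q = untransport q n (g q)" for q
  have "sum t P \<in> W A p n"
    unfolding W_eq_S_sums using P(1-3)
    by (intro CollectI exI[of _ t] exI[of _ P]) (auto simp: t_def untransport(1))
  moreover have "lift (sum t P) = w"
    unfolding lift.sum P(4) t_def using P(3) by (intro sum.cong) (auto simp: lift_untransport)
  ultimately show "w \<in> lift ` W A p n"
    by blast
qed

lemma transport_eq_0_iff: "s \<in> S p n \<Longrightarrow> transport p n s = 0 \<longleftrightarrow> s = 0"
  using inj_onD[OF bij_betw_imp_inj_on[OF bij_betw_transport] _ _ S_0] transport_0 by metis

lemma lift_eq_0_imp: "lift u = 0 \<Longrightarrow> u = 0"
proof -
  assume "lift u = 0"
  obtain g P where P: "finite P" "\<forall>i\<in>P. g i \<in> S (fst i) (snd i)" "u = sum g P"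
    by (rule piecesE)
  have "\<forall>i\<in>P. transport (fst i) (snd i) (g i) \<in> S (fst i) (snd i)"
    using P(2) transport(1) by blast
  moreover have "(\<Sum>i\<in>P. transport (fst i) (snd i) (g i)) = 0"
    using \<open>lift u = 0\<close> lift_sum[OF P(1,2)] P(3) by simp
  ultimately have "\<forall>i\<in>P. transport (fst i) (snd i) (g i) = 0"
    by (rule S_independent[OF P(1)])
  then have "\<forall>i\<in>P. g i = 0"
    using P(2) transport_eq_0_iff by blast
  then show "u = 0"
    unfolding P(3) by simp
qed

lemma bij_lift: "bij lift"
proof (rule bijI)
  show "inj lift"
  proof (rule injI)
    fix u v assume "lift u = lift v"
    then show "u = v"
      using lift_eq_0_imp[of "u - v"] by (simp add: lift.diff)
  qed
  have "w \<in> range lift" for w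
  proof -
    obtain g P where P: "finite P" "\<forall>i\<in>P. g i \<in> S (fst i) (snd i)" "w = sum g P"
      by (rule piecesE)
    have "lift (\<Sum>i\<in>P. untransport (fst i) (snd i) (g i)) = w"
      unfolding lift.sum P(3) using P(2) by (intro sum.cong) (auto simp: lift_untransport)
    then show ?thesis
      by (metis rangeI)
  qed
  then show "surj lift"
    by blast
qed

lemma lift_one: "lift (one A) = one A"
proof -
  obtain v where v: "one A = lift v"
    using surjD[OF bij_is_surj[OF bij_lift]] by blast
  have "lift v = mul A (lift (one A)) (lift v)"
    using lift_mul[of "one A" v] by simp
  then show ?thesis
    using v[symmetric] by simp
qed

lemma lift_deg: "lift ` deg A n \<subseteq> deg A n"
proof clarify
  fix v assume "v \<in> deg A n"
  then obtain p where "v \<in> W A p n"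
    unfolding W_exhaustive[symmetric] by blast
  then show "lift v \<in> deg A n"
    using lift_W_subset W_subset_deg by blast
qed

lemma lift_image_W: "lift ` W A p n = W A p n"
  using lift_W_subset W_subset_lift_W by blast

lemma fil_aut_lift: "fil_aut A lift"
  unfolding fil_aut_def fdga_hom_def
  using lift_add lift_scale lift_deg lift_one lift_mul lift_dif lift_image_W bij_lift
  by simp

lemma Er_induces_lift: "Er_induces A r lift G"
  unfolding Er_induces_def
proof (intro allI ballI)
  fix p n X assume "X \<in> Ep A r p n"
  then obtain s where s: "s \<in> S p n" "X = cls A r p n s"
    by (rule Ep_S)
  have "Er_map A A r lift p n X = cls A r p n (lift s)"
    unfolding s(2) by (rule Er_map_cls[OF pure_fdga_axioms pure_fdga_axioms lift_add lift_W_subset])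
  also have "\<dots> = G p n X"
    using lift_S[OF s(1)] transport(2)[OF s(1)] s(2) by simp
  finally show "Er_map A A r lift p n X = G p n X" .
qed

end

context pure_fdga_hom
begin

lemma splitting_lifts_Er_auts:
  assumes "admits_r_splitting A B r f" and "AutE A B r f GA GB"
  shows "\<exists>FA FB. AutW A B f FA FB \<and> Er_induces A r FA GA \<and> Er_induces B r FB GB"
proof -
  obtain SA SB where SA: "r_splitting A r SA" and SB: "r_splitting B r SB"
    and f_S: "\<forall>p n. f ` SA p n \<subseteq> SB p n"
    using assms(1) unfolding admits_r_splitting_def by blast
  have GA: "Er_aut A r GA" and GB: "Er_aut B r GB"
    and comm: "\<forall>p n. \<forall>X\<in>Ep A r p n. Er_map A B r f p n (GA p n X) = GB p n (Er_map A B r f p n X)"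
    using assms(2) unfolding AutE_def by blast+
  interpret la: Er_aut_lift A r SA GA
    using SA GA by unfold_locales
  interpret lb: Er_aut_lift B r SB GB
    using SB GB by unfold_locales
  have f_transport: "f (la.transport p n s) = lb.transport p n (f s)" if s: "s \<in> SA p n" for p n s
  proof (rule lb.transport_eqI[symmetric])
    show "f s \<in> SB p n" "f (la.transport p n s) \<in> SB p n"
      using f_S s la.transport(1)[OF s] by blast+
    have "cls B r p n (f (la.transport p n s)) = Er_map A B r f p n (GA p n (cls A r p n s))"
      using la.transport(2)[OF s] Er_map_f_cls[of p n "la.transport p n s"] by simp
    also have "\<dots> = GB p n (Er_map A B r f p n (cls A r p n s))"
      using comm la.cls_S_in_Ep[OF s] by blast
    finally show "cls B r p n (f (la.transport p n s)) = GB p n (cls B r p n (f s))"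
      by (simp add: Er_map_f_cls)
  qed
  have "f (la.lift v) = lb.lift (f v)" for v
  proof -
    obtain g P where P: "finite P" "\<forall>i\<in>P. g i \<in> SA (fst i) (snd i)" "v = sum g P"
      by (rule la.piecesE)
    have fP: "\<forall>i\<in>P. f (g i) \<in> SB (fst i) (snd i)"
      using P(2) f_S by blast
    have "f (la.lift v) = (\<Sum>i\<in>P. f (la.transport (fst i) (snd i) (g i)))"
      unfolding P(3) la.lift_sum[OF P(1,2)] f.sum ..
    also have "\<dots> = lb.lift (f v)"
      unfolding P(3) f.sum lb.lift_sum[OF P(1) fP] using P(2) f_transport by (intro sum.cong) auto
    finally show ?thesis .
  qed
  then have "AutW A B f la.lift lb.lift"
    unfolding AutW_def using la.fil_aut_lift lb.fil_aut_lift by blast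
  then show ?thesis
    using la.Er_induces_lift lb.Er_induces_lift by blast
qed

lemma bigrading_lift_imp_admits_r_splitting:
  assumes "\<alpha> \<noteq> 0" and "\<forall>m::nat. 0 < m \<longrightarrow> \<alpha> ^ m \<noteq> 1" and "AutW A B f FA FB"
    and "Er_induces A r FA (bigrading_aut A r \<alpha>)" and "Er_induces B r FB (bigrading_aut B r \<alpha>)"
  shows "admits_r_splitting A B r f"
proof -
  have FA: "fil_aut A FA" and FB: "fil_aut B FB" and comm: "\<And>a. f (FA a) = FB (f a)"
    using assms(3) unfolding AutW_def by blast+
  interpret ea: bigrading_lift A r FA \<alpha>
    using a.bigrading_liftI[OF FA assms(4,1,2)] .
  interpret eb: bigrading_lift B r FB \<alpha>
    using b.bigrading_liftI[OF FB assms(5,1,2)] .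
  have "f ` ea.eigenpart p n \<subseteq> eb.eigenpart p n" for p n
    using comm[symmetric] fdga_hom_smult[OF hom] fdga_hom_W[OF hom]
    by (auto simp: ea.eigenpart_def eb.eigenpart_def ea.eigenvalue_def eb.eigenvalue_def)
  then show ?thesis
    unfolding admits_r_splitting_def using ea.r_splitting_eigenpart eb.r_splitting_eigenpart by blast
qed

end

lemma two_not_root_of_unity: "\<forall>m::nat. 0 < m \<longrightarrow> (2::'k::field_char_0) ^ m \<noteq> 1"
  using of_nat_eq_1_iff[where 'a = 'k, of "2 ^ m" for m] by simp

theorem lemma2p19:
  fixes A :: "('k::field_char_0, 'v::ab_group_add) fdga"
    and B :: "('k, 'w::ab_group_add) fdga"
    and f :: "'v \<Rightarrow> 'w"
    and r :: nat
  assumes "Er_cofibrant_fg A (int r)"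
    and "Er_cofibrant_fg B (int r)"
    and "fdga_hom A B f"
  shows "(admits_r_splitting A B (int r) f
          \<longleftrightarrow> (\<forall>GA GB. AutE A B (int r) f GA GB \<longrightarrow>
                 (\<exists>FA FB. AutW A B f FA FB \<and> Er_induces A (int r) FA GA \<and> Er_induces B (int r) FB GB)))
       \<and> ((\<forall>GA GB. AutE A B (int r) f GA GB \<longrightarrow>
                 (\<exists>FA FB. AutW A B f FA FB \<and> Er_induces A (int r) FA GA \<and> Er_induces B (int r) FB GB))
          \<longleftrightarrow> (\<exists>\<alpha>::'k. \<alpha> \<noteq> 0 \<and> (\<forall>m::nat. 0 < m \<longrightarrow> \<alpha> ^ m \<noteq> 1) \<and>
                 (\<exists>FA FB. AutW A B f FA FB
                    \<and> Er_induces A (int r) FA (bigrading_aut A (int r) \<alpha>)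
                    \<and> Er_induces B (int r) FB (bigrading_aut B (int r) \<alpha>))))"
proof -
  interpret pure_fdga_hom A B "int r" f
    using pure_fdga_if_Er_cofibrant_fg[OF assms(1)] pure_fdga_if_Er_cofibrant_fg[OF assms(2)] assms(3)
    by (simp add: pure_fdga_hom_def pure_fdga_hom_axioms_def)
  have "AutE A B (int r) f (bigrading_aut A (int r) 2) (bigrading_aut B (int r) 2)"
    by (rule AutE_bigrading_aut) simp
  moreover have "(2::'k) \<noteq> 0"
    by simp
  ultimately show ?thesis
    using splitting_lifts_Er_auts bigrading_lift_imp_admits_r_splitting two_not_root_of_unity
    by blast
qed

end
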